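(* Let $\xi,\zeta$ be admissible families with $E[\operatorname{ess\,sup}_{\theta\in\mathcal T}(\xi(\theta))^-]<+\infty$, $E[\operatorname{ess\,sup}_{\theta\in\mathcal T}(\zeta(\theta))^+]<+\infty$ and $\xi(T)=\zeta(T)=0$ a.s., and let $J,J'$ be the associated families defined in the context. The following assertions are equivalent: (i) $J(0)<+\infty$; (ii) $J'(0)<+\infty$; (iii) (Mokobodski's condition) there exist two nonnegative supermartingale families $H$ and $H'$ with $H(0)<+\infty$ (or equivalently with $H'(0)<+\infty$) such that $\xi\le H-H'\le\zeta$.
   Context: Let $(\Omega,\mathcal F,(\mathcal F_t)_{0\le t\le T},P)$ be a filtered probability space satisfying the usual conditions, with $\mathcal F=\mathcal F_T$, $\mathcal F_0$ containing only sets of probability $0$ or $1$, and fixed $T\in(0,\infty)$. $\mathcal T$ is the set of stopping times with values in $[0,T]$; $\mathcal T_S=\{\theta\in\mathcal T:\theta\ge S\text{ a.s.}\}$. A family $\phi=(\phi(\theta),\theta\in\mathcal T)$ of $\overline{\mathbb R}$-valued random variables is admissible if each $\phi(\theta)$ is $\mathcal F_\theta$-measurable and $\phi(\theta)=\phi(\theta')$ a.s. on $\{\theta=\theta'\}$. Inequalities between families are meant for each $\theta\in\mathcal T$ almost surely. An admissible family $\phi$ with $E[\operatorname{ess\,sup}_\theta\phi(\theta)^-]<\infty$ is a supermartingale family if $E[\phi(\theta)\mid\mathcal F_{\theta'}]\le\phi(\theta')$ a.s. whenever $\theta\ge\theta'$ a.s. Define $J_0=J'_0=0$ and $J_{n+1}(\theta)=\operatorname{ess\,sup}_{\tau\in\mathcal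 T_\theta}E[J'_n(\tau)+\xi(\tau)\mid\mathcal F_\theta]$, $J'_{n+1}(\theta)=\operatorname{ess\,sup}_{\sigma\in\mathcal T_\theta}E[J_n(\sigma)-\zeta(\sigma)\mid\mathcal F_\theta]$, and $J(\theta)=\limsup_n J_n(\theta)$, $J'(\theta)=\limsup_n J'_n(\theta)$ (these are $[0,+\infty]$-valued). *)

theory Defs
  imports "HOL-Probability.Probability"
begin

text \<open>Random variables are extended-real valued; a family is indexed by random times
  (functions 'a => real); only stopping times with values in [0,Tm] matter.\<close>

type_synonym 'a family = "('a \<Rightarrow> real) \<Rightarrow> 'a \<Rightarrow> ereal"

definition Fsig :: "'a measure \<Rightarrow> (real \<Rightarrow> 'a measure) \<Rightarrow> ('a \<Rightarrow> real) \<Rightarrow> 'a measure" where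
  "Fsig M F \<theta> = filtration.pre_sigma (space M) F \<theta>"

definition STs :: "'a measure \<Rightarrow> (real \<Rightarrow> 'a measure) \<Rightarrow> real \<Rightarrow> ('a \<Rightarrow> real) set" where
  "STs M F Tm = {\<tau>. stopping_time F \<tau> \<and> (\<forall>\<omega>\<in>space M. 0 \<le> \<tau> \<omega> \<and> \<tau> \<omega> \<le> Tm)}"

definition STs_from :: "'a measure \<Rightarrow> (real \<Rightarrow> 'a measure) \<Rightarrow> real \<Rightarrow> ('a \<Rightarrow> real) \<Rightarrow> ('a \<Rightarrow> real) set" where
  "STs_from M F Tm S = {\<theta> \<in> STs M F Tm. AE \<omega> in M. S \<omega> \<le> \<theta> \<omega>}"

text \<open>Generalized conditional expectation of an extended-real random variable:
  E[X^+|N] - E[X^-|N] (well defined whenever one of the two parts is finite).\<close>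
definition ereal_cond_exp :: "'a measure \<Rightarrow> 'a measure \<Rightarrow> ('a \<Rightarrow> ereal) \<Rightarrow> 'a \<Rightarrow> ereal" where
  "ereal_cond_exp M N X = (\<lambda>\<omega>.
      enn2ereal (nn_cond_exp M N (\<lambda>x. e2ennreal (X x)) \<omega>)
    - enn2ereal (nn_cond_exp M N (\<lambda>x. e2ennreal (- X x)) \<omega>))"

definition is_esssup_fam :: "'a measure \<Rightarrow> 'a measure \<Rightarrow> ('a \<Rightarrow> ereal) set \<Rightarrow> ('a \<Rightarrow> ereal) \<Rightarrow> bool" where
  "is_esssup_fam M N S Y \<longleftrightarrow>
     Y \<in> borel_measurable N \<and>
     (\<forall>X\<in>S. AE \<omega> in M. X \<omega> \<le> Y \<omega>) \<and>
     (\<forall>Z\<in>borel_measurable N. (\<forall>X\<in>S. AE \<omega> in M. X \<omega> \<le> Z \<omega>) \<longrightarrow> (AE \<omega> in M. Y \<omega> \<le> Z \<omega>))"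

definition esssup_fam :: "'a measure \<Rightarrow> 'a measure \<Rightarrow> ('a \<Rightarrow> ereal) set \<Rightarrow> 'a \<Rightarrow> ereal" where
  "esssup_fam M N S = (SOME Y. is_esssup_fam M N S Y)"

definition admissible :: "'a measure \<Rightarrow> (real \<Rightarrow> 'a measure) \<Rightarrow> real \<Rightarrow> 'a family \<Rightarrow> bool" where
  "admissible M F Tm \<phi> \<longleftrightarrow>
     (\<forall>\<theta>\<in>STs M F Tm. \<phi> \<theta> \<in> borel_measurable (Fsig M F \<theta>)) \<and>
     (\<forall>\<theta>\<in>STs M F Tm. \<forall>\<theta>'\<in>STs M F Tm. AE \<omega> in M. \<theta> \<omega> = \<theta>' \<omega> \<longrightarrow> \<phi> \<theta> \<omega> = \<phi> \<theta>' \<omega>)"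

definition neg_part_integrable :: "'a measure \<Rightarrow> (real \<Rightarrow> 'a measure) \<Rightarrow> real \<Rightarrow> 'a family \<Rightarrow> bool" where
  "neg_part_integrable M F Tm \<phi> \<longleftrightarrow>
     (\<integral>\<^sup>+ \<omega>. e2ennreal (esssup_fam M M {(\<lambda>x. max 0 (- \<phi> \<theta> x)) | \<theta>. \<theta> \<in> STs M F Tm} \<omega>) \<partial>M) < \<infinity>"

definition pos_part_integrable :: "'a measure \<Rightarrow> (real \<Rightarrow> 'a measure) \<Rightarrow> real \<Rightarrow> 'a family \<Rightarrow> bool" where
  "pos_part_integrable M F Tm \<phi> \<longleftrightarrow>
     (\<integral>\<^sup>+ \<omega>. e2ennreal (esssup_fam M M {(\<lambda>x. max 0 (\<phi> \<theta> x)) | \<theta>. \<theta> \<in> STs M F Tm} \<omega>) \<partial>M) < \<infinity>"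

definition supermart_family :: "'a measure \<Rightarrow> (real \<Rightarrow> 'a measure) \<Rightarrow> real \<Rightarrow> 'a family \<Rightarrow> bool" where
  "supermart_family M F Tm \<phi> \<longleftrightarrow>
     admissible M F Tm \<phi> \<and> neg_part_integrable M F Tm \<phi> \<and>
     (\<forall>\<theta>\<in>STs M F Tm. \<forall>\<theta>'\<in>STs M F Tm. (AE \<omega> in M. \<theta>' \<omega> \<le> \<theta> \<omega>) \<longrightarrow>
        (AE \<omega> in M. ereal_cond_exp M (Fsig M F \<theta>') (\<phi> \<theta>) \<omega> \<le> \<phi> \<theta>' \<omega>))"

fun Jpair :: "'a measure \<Rightarrow> (real \<Rightarrow> 'a measure) \<Rightarrow> real \<Rightarrow> 'a family \<Rightarrow> 'a family \<Rightarrow> nat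
    \<Rightarrow> 'a family \<times> 'a family" where
  "Jpair M F Tm \<xi> \<zeta> 0 = ((\<lambda>\<theta> \<omega>. 0), (\<lambda>\<theta> \<omega>. 0))"
| "Jpair M F Tm \<xi> \<zeta> (Suc n) =
    ((\<lambda>\<theta>. esssup_fam M (Fsig M F \<theta>)
        {ereal_cond_exp M (Fsig M F \<theta>) (\<lambda>\<omega>. snd (Jpair M F Tm \<xi> \<zeta> n) \<tau> \<omega> + \<xi> \<tau> \<omega>)
          | \<tau>. \<tau> \<in> STs_from M F Tm \<theta>}),
     (\<lambda>\<theta>. esssup_fam M (Fsig M F \<theta>)
        {ereal_cond_exp M (Fsig M F \<theta>) (\<lambda>\<omega>. fst (Jpair M F Tm \<xi> \<zeta> n) \<sigma> \<omega> - \<zeta> \<sigma> \<omega>)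
          | \<sigma>. \<sigma> \<in> STs_from M F Tm \<theta>}))"

definition Jn :: "'a measure \<Rightarrow> (real \<Rightarrow> 'a measure) \<Rightarrow> real \<Rightarrow> 'a family \<Rightarrow> 'a family \<Rightarrow> nat \<Rightarrow> 'a family" where
  "Jn M F Tm \<xi> \<zeta> n = fst (Jpair M F Tm \<xi> \<zeta> n)"

definition J'n :: "'a measure \<Rightarrow> (real \<Rightarrow> 'a measure) \<Rightarrow> real \<Rightarrow> 'a family \<Rightarrow> 'a family \<Rightarrow> nat \<Rightarrow> 'a family" where
  "J'n M F Tm \<xi> \<zeta> n = snd (Jpair M F Tm \<xi> \<zeta> n)"

definition Jlim :: "'a measure \<Rightarrow> (real \<Rightarrow> 'a measure) \<Rightarrow> real \<Rightarrow> 'a family \<Rightarrow> 'a family \<Rightarrow> 'a family" where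
  "Jlim M F Tm \<xi> \<zeta> = (\<lambda>\<theta> \<omega>. limsup (\<lambda>n. Jn M F Tm \<xi> \<zeta> n \<theta> \<omega>))"

definition J'lim :: "'a measure \<Rightarrow> (real \<Rightarrow> 'a measure) \<Rightarrow> real \<Rightarrow> 'a family \<Rightarrow> 'a family \<Rightarrow> 'a family" where
  "J'lim M F Tm \<xi> \<zeta> = (\<lambda>\<theta> \<omega>. limsup (\<lambda>n. J'n M F Tm \<xi> \<zeta> n \<theta> \<omega>))"

definition std_setting :: "'a measure \<Rightarrow> (real \<Rightarrow> 'a measure) \<Rightarrow> real \<Rightarrow> bool" where
  "std_setting M F Tm \<longleftrightarrow>
     prob_space M \<and> 0 < Tm \<and>
     filtration (space M) F \<and>
     (\<forall>t. sets (F t) \<subseteq> sets M) \<and>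
     sets (F Tm) = sets M \<and>
     (\<forall>A\<in>sets (F 0). emeasure M A = 0 \<or> emeasure M A = 1) \<and>
     (\<forall>N\<in>null_sets M. \<forall>A. A \<subseteq> N \<longrightarrow> A \<in> sets (F 0)) \<and>
     (\<forall>t. 0 \<le> t \<and> t < Tm \<longrightarrow> sets (F t) = (\<Inter>s\<in>{t<..}. sets (F s)))"

end

theory Submission
  imports Defs
begin

text \<open>The sequences \<open>J\<^sub>n\<close>, \<open>J'\<^sub>n\<close> are Snell envelopes of \<open>J'\<^sub>n\<^sub>-\<^sub>1 + \<xi>\<close> and \<open>J\<^sub>n\<^sub>-\<^sub>1 - \<zeta>\<close>;
  by induction they are increasing nonnegative supermartingale families, hence so are their limits
  \<open>J\<close> and \<open>J'\<close>. If \<open>J(0) < \<infinity>\<close>, the supermartingale inequality makes \<open>J(\<theta>)\<close> finite for every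
  stopping time, and letting \<open>n \<rightarrow> \<infinity>\<close> in \<open>J'\<^sub>n + \<xi> \<le> J\<^sub>n\<^sub>+\<^sub>1\<close>, \<open>J\<^sub>n - \<zeta> \<le> J'\<^sub>n\<^sub>+\<^sub>1\<close>
  shows that \<open>(J, J')\<close> satisfies Mokobodski's condition. Conversely, a Snell envelope is the smallest
  supermartingale above its obstacle, so any pair \<open>(H, H')\<close> as in Mokobodski's condition dominates
  \<open>(J\<^sub>n, J'\<^sub>n)\<close> for all \<open>n\<close>, and \<open>J(0) \<le> H(0)\<close>; moreover \<open>H(0) < \<infinity>\<close> follows from
  \<open>H'(0) < \<infinity>\<close> because \<open>H - H' \<le> \<zeta>\<close>. Finally, passing from \<open>(\<xi>, \<zeta>)\<close> to \<open>(-\<zeta>, -\<xi>)\<close> exchanges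
  \<open>J\<close> and \<open>J'\<close>, which gives (i) \<open>\<longleftrightarrow>\<close> (ii).\<close>

section \<open>Essential supremum of a family of random variables\<close>

definition arctan_ereal :: "ereal \<Rightarrow> real" where
  "arctan_ereal x = (if x = \<infinity> then pi/2 else if x = -\<infinity> then -pi/2 else arctan (real_of_ereal x))"

lemma arctan_ereal_measurable[measurable]: "arctan_ereal \<in> borel_measurable borel"
  unfolding arctan_ereal_def by measurable

lemma arctan_ereal_less: "x < y \<Longrightarrow> arctan_ereal x < arctan_ereal y"
  using arctan_ubound arctan_lbound
  by (cases x; cases y) (auto simp: arctan_ereal_def arctan_less_iff)

lemma arctan_ereal_mono: "x \<le> y \<Longrightarrow> arctan_ereal x \<le> arctan_ereal y"
  using arctan_ereal_less[of x y] by (auto simp: le_less)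

lemma arctan_ereal_inject: "arctan_ereal x = arctan_ereal y \<Longrightarrow> x = y"
  using arctan_ereal_less[of x y] arctan_ereal_less[of y x] by (cases x y rule: linorder_cases) auto

lemma abs_arctan_ereal_le: "\<bar>arctan_ereal x\<bar> \<le> 2"
proof -
  have "\<bar>arctan r\<bar> \<le> 2" for r using arctan_ubound[of r] arctan_lbound[of r] pi_less_4 by auto
  then show ?thesis using pi_less_4 pi_gt3 by (auto simp: arctan_ereal_def)
qed

lemma countable_subset_maximal:
  fixes v :: "'b set \<Rightarrow> real"
  assumes mono: "\<And>C D. countable D \<Longrightarrow> D \<subseteq> S \<Longrightarrow> C \<subseteq> D \<Longrightarrow> v C \<le> v D"
    and bounded: "\<And>C. countable C \<Longrightarrow> C \<subseteq> S \<Longrightarrow> v C \<le> B"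
  shows "\<exists>C. countable C \<and> C \<subseteq> S \<and> (\<forall>X\<in>S. v (insert X C) = v C)"
proof -
  let ?K = "{C. countable C \<and> C \<subseteq> S}"
  define s where "s = Sup (v ` ?K)"
  have bdd: "bdd_above (v ` ?K)" using bounded by (auto intro!: bdd_aboveI)
  have le_s: "v C \<le> s" if "C \<in> ?K" for C
    unfolding s_def using bdd that by (intro cSup_upper) auto
  have "\<forall>k::nat. \<exists>C\<in>?K. s - 1 / Suc k < v C"
  proof
    fix k :: nat
    have "s - 1 / Suc k < s" by simp
    moreover have "{} \<in> ?K" by simp
    ultimately show "\<exists>C\<in>?K. s - 1 / Suc k < v C" unfolding s_def
      using less_cSupD[of "v ` ?K"] by blast
  qed
  then obtain Cs where Cs: "\<And>k. Cs k \<in> ?K" "\<And>k. s - 1 / Suc k < v (Cs k)" by metis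
  define C where "C = (\<Union>k. Cs k)"
  have CK: "C \<in> ?K" using Cs(1) unfolding C_def by auto
  have vC: "v C = s"
  proof (rule antisym[OF le_s[OF CK]], rule ccontr)
    assume "\<not> s \<le> v C"
    then have "0 < s - v C" by simp
    then obtain k where k: "inverse (real (Suc k)) < s - v C" using reals_Archimedean by blast
    have "v (Cs k) \<le> v C" using mono CK unfolding C_def by auto
    with Cs(2)[of k] k show False by (simp add: inverse_eq_divide)
  qed
  have "v (insert X C) = v C" if "X \<in> S" for X
    using le_s[of "insert X C"] mono[where C=C and D="insert X C"] CK that vC by fastforce
  with CK show ?thesis by blast
qed

lemma is_esssup_fam_SUP_countable:
  assumes "countable C" "C \<subseteq> S" and meas: "\<And>X. X \<in> S \<Longrightarrow> X \<in> borel_measurable N"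
    and upper: "\<And>X. X \<in> S \<Longrightarrow> AE \<omega> in M. X \<omega> \<le> (SUP Y\<in>C. Y \<omega>)"
  shows "is_esssup_fam M N S (\<lambda>\<omega>. SUP Y\<in>C. Y \<omega>)"
  unfolding is_esssup_fam_def
proof (intro conjI ballI allI impI)
  show "(\<lambda>\<omega>. SUP Y\<in>C. Y \<omega>) \<in> borel_measurable N"
    using assms(1,2) meas by (intro borel_measurable_SUP) auto
next
  fix Z assume "Z \<in> borel_measurable N" and "\<forall>X\<in>S. AE \<omega> in M. X \<omega> \<le> Z \<omega>"
  then have "AE \<omega> in M. \<forall>X\<in>C. X \<omega> \<le> Z \<omega>"
    using assms(1,2) by (subst AE_ball_countable) auto
  then show "AE \<omega> in M. (SUP Y\<in>C. Y \<omega>) \<le> Z \<omega>"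
    by eventually_elim (auto intro: SUP_least)
qed (rule upper)

text \<open>Countable suprema are compared through the bounded, strictly monotone functional
  \<open>C \<mapsto> E[arctan_ereal (sup C)]\<close>; a countable subfamily maximizing it realizes the essential
  supremum.\<close>

lemma is_esssup_fam_countable_SUP:
  fixes S :: "('a \<Rightarrow> ereal) set"
  assumes "finite_measure M" and sub: "subalgebra M N"
    and meas: "\<And>X. X \<in> S \<Longrightarrow> X \<in> borel_measurable N"
  shows "\<exists>C. countable C \<and> C \<subseteq> S \<and> is_esssup_fam M N S (\<lambda>\<omega>. SUP X\<in>C. X \<omega>)"
proof -
  interpret finite_measure M by fact
  define sp where "sp C = (\<lambda>\<omega>. SUP X\<in>C. X \<omega>)" for C :: "('a \<Rightarrow> ereal) set"
  define v where "v C = (\<integral>\<omega>. arctan_ereal (sp C \<omega>) \<partial>M)" for C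
  have int: "integrable M (\<lambda>\<omega>. arctan_ereal (sp C \<omega>))" if "countable C" "C \<subseteq> S" for C
  proof (rule integrable_const_bound[where B=2])
    have "sp C \<in> borel_measurable N" using that meas unfolding sp_def by (intro borel_measurable_SUP) auto
    then have [measurable]: "sp C \<in> borel_measurable M" by (rule measurable_from_subalg[OF sub])
    show "(\<lambda>\<omega>. arctan_ereal (sp C \<omega>)) \<in> borel_measurable M" by measurable
  qed (simp add: abs_arctan_ereal_le)
  have sp_mono: "sp C \<omega> \<le> sp D \<omega>" if "C \<subseteq> D" for C D \<omega>
    unfolding sp_def using that by (rule SUP_subset_mono) simp
  have "\<exists>C. countable C \<and> C \<subseteq> S \<and> (\<forall>X\<in>S. v (insert X C) = v C)"
  proof (rule countable_subset_maximal)
    show "v C \<le> v D" if "countable D" "D \<subseteq> S" "C \<subseteq> D" for C D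
      unfolding v_def using that countable_subset[OF that(3,1)]
      by (intro integral_mono int arctan_ereal_mono sp_mono) auto
    show "v C \<le> 2 * measure M (space M)" if "countable C" "C \<subseteq> S" for C
      using integral_mono[OF int[OF that], of "\<lambda>_. 2"] abs_arctan_ereal_le
      by (auto simp: v_def abs_le_iff)
  qed
  then obtain C where C: "countable C" "C \<subseteq> S" and max: "\<And>X. X \<in> S \<Longrightarrow> v (insert X C) = v C"
    by blast
  have "AE \<omega> in M. X \<omega> \<le> sp C \<omega>" if X: "X \<in> S" for X
  proof -
    have CX: "countable (insert X C)" "insert X C \<subseteq> S" using C X by auto
    have "AE \<omega> in M. arctan_ereal (sp C \<omega>) = arctan_ereal (sp (insert X C) \<omega>)"
      by (rule integral_ineq_eq_0_then_AE[OF _ int[OF C] int[OF CX]])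
         (use max[OF X] in \<open>auto simp: v_def intro!: arctan_ereal_mono sp_mono\<close>)
    then show ?thesis
    proof eventually_elim
      case (elim \<omega>)
      have "X \<omega> \<le> sp (insert X C) \<omega>" unfolding sp_def by (rule SUP_upper) simp
      with arctan_ereal_inject[OF elim] show ?case by simp
    qed
  qed
  with C show ?thesis
    using is_esssup_fam_SUP_countable[OF C meas] unfolding sp_def by blast
qed

lemma directed_seq_above:
  fixes g :: "nat \<Rightarrow> 'a \<Rightarrow> ereal"
  assumes g: "\<And>k. g k \<in> S"
    and directed: "\<And>X Y. X \<in> S \<Longrightarrow> Y \<in> S \<Longrightarrow> \<exists>Z\<in>S. AE \<omega> in M. max (X \<omega>) (Y \<omega>) \<le> Z \<omega>"
  shows "\<exists>d. (\<forall>k. d k \<in> S) \<and> d 0 = g 0 \<and> (AE \<omega> in M. \<forall>k. max (d k \<omega>) (g (Suc k) \<omega>) \<le> d (Suc k) \<omega>)"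
proof -
  define next_above where
    "next_above k Z = (SOME W. W \<in> S \<and> (AE \<omega> in M. max (Z \<omega>) (g (Suc k) \<omega>) \<le> W \<omega>))" for k Z
  define d where "d = rec_nat (g 0) next_above"
  have d_0: "d 0 = g 0" and d_Suc: "d (Suc k) = next_above k (d k)" for k
    unfolding d_def by simp_all
  have next_above: "next_above k Z \<in> S \<and> (AE \<omega> in M. max (Z \<omega>) (g (Suc k) \<omega>) \<le> next_above k Z \<omega>)"
    if "Z \<in> S" for k Z
  proof -
    have "\<exists>W. W \<in> S \<and> (AE \<omega> in M. max (Z \<omega>) (g (Suc k) \<omega>) \<le> W \<omega>)"
      using directed[OF that g] by blast
    then show ?thesis unfolding next_above_def by (rule someI_ex)
  qed
  have d_in: "d k \<in> S" for k
  proof (induction k)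
    case 0 show ?case using g by (simp add: d_0)
  next
    case (Suc k) show ?case using next_above[OF Suc] by (simp add: d_Suc)
  qed
  have "AE \<omega> in M. \<forall>k. max (d k \<omega>) (g (Suc k) \<omega>) \<le> d (Suc k) \<omega>"
    unfolding AE_all_countable d_Suc using next_above[OF d_in] by blast
  with d_in d_0 show ?thesis by blast
qed

locale esssup_subalgebra =
  fixes M N :: "'a measure"
  assumes finite_M: "finite_measure M" and subalg: "subalgebra M N"
begin

context
  fixes S :: "('a \<Rightarrow> ereal) set"
  assumes meas: "\<And>X. X \<in> S \<Longrightarrow> X \<in> borel_measurable N"
begin

lemma is_esssup_fam_esssup_fam: "is_esssup_fam M N S (esssup_fam M N S)"
proof -
  obtain C where "is_esssup_fam M N S (\<lambda>\<omega>. SUP X\<in>C. X \<omega>)"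
    using is_esssup_fam_countable_SUP[OF finite_M subalg meas] by blast
  then show ?thesis unfolding esssup_fam_def by (rule someI[where P="is_esssup_fam M N S"])
qed

lemma esssup_fam_measurable[measurable]: "esssup_fam M N S \<in> borel_measurable N"
  using is_esssup_fam_esssup_fam unfolding is_esssup_fam_def by blast

lemma esssup_fam_upper: "X \<in> S \<Longrightarrow> AE \<omega> in M. X \<omega> \<le> esssup_fam M N S \<omega>"
  using is_esssup_fam_esssup_fam unfolding is_esssup_fam_def by blast

lemma esssup_fam_least:
  "Z \<in> borel_measurable N \<Longrightarrow> (\<And>X. X \<in> S \<Longrightarrow> AE \<omega> in M. X \<omega> \<le> Z \<omega>)
   \<Longrightarrow> AE \<omega> in M. esssup_fam M N S \<omega> \<le> Z \<omega>"
  using is_esssup_fam_esssup_fam unfolding is_esssup_fam_def by blast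

lemma esssup_fam_SUP_seq:
  assumes "S \<noteq> {}"
  obtains f :: "nat \<Rightarrow> 'a \<Rightarrow> ereal"
  where "\<And>k. f k \<in> S" "AE \<omega> in M. esssup_fam M N S \<omega> = (SUP k. f k \<omega>)"
proof -
  obtain C where C: "countable C" "C \<subseteq> S" and C_esssup: "is_esssup_fam M N S (\<lambda>\<omega>. SUP X\<in>C. X \<omega>)"
    using is_esssup_fam_countable_SUP[OF finite_M subalg meas] by blast
  obtain X0 where X0: "X0 \<in> S" using assms by blast
  define f where "f = from_nat_into (insert X0 C)"
  have range_f: "range f = insert X0 C"
    unfolding f_def using C by (intro range_from_nat_into) auto
  have "AE \<omega> in M. esssup_fam M N S \<omega> \<le> (SUP X\<in>C. X \<omega>)"
    using C_esssup unfolding is_esssup_fam_def by (intro esssup_fam_least) auto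
  moreover have "AE \<omega> in M. (SUP X\<in>C. X \<omega>) \<le> esssup_fam M N S \<omega>"
    using C_esssup is_esssup_fam_esssup_fam unfolding is_esssup_fam_def by blast
  ultimately have "AE \<omega> in M. esssup_fam M N S \<omega> = (SUP k. f k \<omega>)"
    using esssup_fam_upper[OF X0]
  proof eventually_elim
    case (elim \<omega>)
    have "(SUP k. f k \<omega>) = (SUP X\<in>insert X0 C. X \<omega>)"
      unfolding range_f[symmetric] by (simp only: image_image)
    also have "\<dots> = (SUP X\<in>C. X \<omega>)" using elim by (simp add: sup_absorb2)
    finally show ?case using elim by simp
  qed
  moreover have "f k \<in> S" for k using range_f C X0 by (metis insert_subset rangeI subsetD)
  ultimately show ?thesis using that by blast
qed

lemma esssup_fam_incseq:
  assumes "S \<noteq> {}"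
    and directed: "\<And>X Y. X \<in> S \<Longrightarrow> Y \<in> S \<Longrightarrow> \<exists>Z\<in>S. AE \<omega> in M. max (X \<omega>) (Y \<omega>) \<le> Z \<omega>"
  obtains f :: "nat \<Rightarrow> 'a \<Rightarrow> ereal"
  where "\<And>k. f k \<in> S" "AE \<omega> in M. incseq (\<lambda>k. f k \<omega>)"
    "AE \<omega> in M. esssup_fam M N S \<omega> = (SUP k. f k \<omega>)"
proof -
  obtain g :: "nat \<Rightarrow> 'a \<Rightarrow> ereal" where g: "\<And>k. g k \<in> S"
    and g_SUP: "AE \<omega> in M. esssup_fam M N S \<omega> = (SUP k. g k \<omega>)"
    using esssup_fam_SUP_seq[OF assms(1)] by blast
  obtain d :: "nat \<Rightarrow> 'a \<Rightarrow> ereal" where d_in: "\<And>k. d k \<in> S" and d_0: "d 0 = g 0"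
    and d_step: "AE \<omega> in M. \<forall>k. max (d k \<omega>) (g (Suc k) \<omega>) \<le> d (Suc k) \<omega>"
    using directed_seq_above[where g=g and S=S and M=M, OF g directed] by blast
  have "AE \<omega> in M. \<forall>k. d k \<omega> \<le> esssup_fam M N S \<omega>"
    unfolding AE_all_countable using d_in by (blast intro: esssup_fam_upper)
  with d_step g_SUP have "AE \<omega> in M. incseq (\<lambda>k. d k \<omega>) \<and> esssup_fam M N S \<omega> = (SUP k. d k \<omega>)"
  proof eventually_elim
    case (elim \<omega>)
    have g_le_d: "g k \<omega> \<le> d k \<omega>" for k
      by (cases k) (use elim d_0 in auto)
    have "esssup_fam M N S \<omega> \<le> (SUP k. d k \<omega>)"
      unfolding elim(2) using g_le_d by (intro SUP_mono) blast
    moreover have "(SUP k. d k \<omega>) \<le> esssup_fam M N S \<omega>"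
      using elim(3) by (auto intro: SUP_least)
    moreover have "incseq (\<lambda>k. d k \<omega>)" by (rule incseq_SucI) (use elim in auto)
    ultimately show ?case by auto
  qed
  then have "AE \<omega> in M. incseq (\<lambda>k. d k \<omega>)" "AE \<omega> in M. esssup_fam M N S \<omega> = (SUP k. d k \<omega>)"
    by (auto elim: eventually_mono)
  with d_in show ?thesis by (rule that)
qed

end

end

section \<open>Conditional expectation of extended-real random variables\<close>

lemma enn2ereal_zero[simp]: "enn2ereal 0 = 0"
  by (simp add: zero_ennreal.rep_eq)

lemma enn2ereal_e2ennreal_max: "enn2ereal (e2ennreal x) = max 0 x"
  by (cases "0 \<le> x") (auto simp: enn2ereal_e2ennreal e2ennreal_neg)

lemma abs_enn2ereal_less_top: "a < top \<Longrightarrow> \<bar>enn2ereal a\<bar> \<noteq> \<infinity>"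
  by (metis abs_ereal_ge0 enn2ereal_eq_top_iff enn2ereal_nonneg less_irrefl)

lemma ereal_pos_part_minus_neg_part: "enn2ereal (e2ennreal x) - enn2ereal (e2ennreal (- x)) = (x::ereal)"
  unfolding enn2ereal_e2ennreal_max by (cases x) (auto simp: max_def)

lemma enn2ereal_SUP: "enn2ereal (SUP k::nat. f k) = (SUP k. enn2ereal (f k))"
proof -
  have "enn2ereal (SUP k::nat. f k) = sup 0 (Sup (enn2ereal ` range f))"
    by (simp add: Sup_ennreal.rep_eq)
  also have "\<dots> = (SUP k. enn2ereal (f k))"
    using SUP_upper[of 0 UNIV "\<lambda>k. enn2ereal (f k)"] enn2ereal_nonneg[of "f 0"]
    by (simp add: image_comp max_def) (metis enn2ereal_nonneg order.trans)
  finally show ?thesis .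
qed

lemma e2ennreal_SUP: "e2ennreal (SUP n::nat. g n) = (SUP n. e2ennreal (g n))"
proof -
  have "e2ennreal (Sup (range g)) = Sup (e2ennreal ` range g)"
    by (rule continuous_at_Sup_mono) (auto simp: mono_def e2ennreal_mono continuous_at_e2ennreal)
  then show ?thesis by (simp add: image_comp)
qed

lemma e2ennreal_SUP_add:
  fixes y :: "nat \<Rightarrow> ereal"
  assumes "\<bar>g\<bar> \<noteq> \<infinity>"
  shows "e2ennreal ((SUP k. y k) + g) = (SUP k. e2ennreal (y k + g))"
proof -
  have "(SUP k. y k) + g = (SUP k. y k + g)"
    using assms by (intro SUP_ereal_add_left[symmetric]) auto
  then show ?thesis by (simp add: e2ennreal_SUP)
qed

lemma e2ennreal_add_shift:
  fixes x :: ereal and g :: ennreal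
  assumes "- enn2ereal g \<le> x" "g < top"
  shows "e2ennreal x + g = e2ennreal (x + enn2ereal g) + e2ennreal (- x)"
proof -
  obtain r where "g = ennreal r" "0 \<le> r"
    using assms(2) by (cases g rule: ennreal_cases) auto
  with assms(1) show ?thesis
    by (simp add: enn2ereal_inject[symmetric] plus_ennreal.rep_eq enn2ereal_e2ennreal_max)
       (cases x; auto simp: max_def)
qed

lemma ereal_diff_eq_of_add_eq:
  fixes a b c g :: ereal
  assumes "a + g = b + c" "\<bar>g\<bar> \<noteq> \<infinity>" "\<bar>c\<bar> \<noteq> \<infinity>"
  shows "a - c = b - g"
  using assms by (cases a; cases b; cases c; cases g) auto

context sigma_finite_subalgebra
begin

lemma ereal_cond_exp_measurable[measurable]: "ereal_cond_exp M F X \<in> borel_measurable F"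
  unfolding ereal_cond_exp_def by measurable

lemma nn_integral_nn_cond_exp:
  assumes "f \<in> borel_measurable M"
  shows "(\<integral>\<^sup>+\<omega>. nn_cond_exp M F f \<omega> \<partial>M) = (\<integral>\<^sup>+\<omega>. f \<omega> \<partial>M)"
  using nn_cond_exp_intg[of "\<lambda>_. 1" f] assms by simp

lemma ereal_cond_exp_mono:
  assumes [measurable]: "X \<in> borel_measurable M" "Y \<in> borel_measurable M"
    and le: "AE \<omega> in M. X \<omega> \<le> Y \<omega>"
  shows "AE \<omega> in M. ereal_cond_exp M F X \<omega> \<le> ereal_cond_exp M F Y \<omega>"
proof -
  have "AE \<omega> in M. nn_cond_exp M F (\<lambda>x. e2ennreal (X x)) \<omega> \<le> nn_cond_exp M F (\<lambda>x. e2ennreal (Y x)) \<omega>"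
    using le by (intro nn_cond_exp_mono) (auto elim!: eventually_mono intro: e2ennreal_mono)
  moreover have "AE \<omega> in M. nn_cond_exp M F (\<lambda>x. e2ennreal (- Y x)) \<omega> \<le> nn_cond_exp M F (\<lambda>x. e2ennreal (- X x)) \<omega>"
    using le by (intro nn_cond_exp_mono) (auto elim!: eventually_mono intro: e2ennreal_mono)
  ultimately show ?thesis
    unfolding ereal_cond_exp_def
    by eventually_elim (intro ereal_minus_mono, auto simp: less_eq_ennreal.rep_eq)
qed

lemma ereal_cond_exp_cong:
  assumes [measurable]: "X \<in> borel_measurable M" "Y \<in> borel_measurable M"
    and eq: "AE \<omega> in M. X \<omega> = Y \<omega>"
  shows "AE \<omega> in M. ereal_cond_exp M F X \<omega> = ereal_cond_exp M F Y \<omega>"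
proof -
  have "AE \<omega> in M. ereal_cond_exp M F X \<omega> \<le> ereal_cond_exp M F Y \<omega>"
    using eq by (intro ereal_cond_exp_mono) (auto elim: eventually_mono)
  moreover have "AE \<omega> in M. ereal_cond_exp M F Y \<omega> \<le> ereal_cond_exp M F X \<omega>"
    using eq by (intro ereal_cond_exp_mono) (auto elim: eventually_mono)
  ultimately show ?thesis by eventually_elim (rule antisym)
qed

lemma ereal_cond_exp_F_meas:
  assumes [measurable]: "X \<in> borel_measurable F"
  shows "AE \<omega> in M. ereal_cond_exp M F X \<omega> = X \<omega>"
proof -
  have "AE \<omega> in M. e2ennreal (X \<omega>) = nn_cond_exp M F (\<lambda>x. e2ennreal (X x)) \<omega>"
    by (rule nn_cond_exp_F_meas) measurable
  moreover have "AE \<omega> in M. e2ennreal (- X \<omega>) = nn_cond_exp M F (\<lambda>x. e2ennreal (- X x)) \<omega>"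
    by (rule nn_cond_exp_F_meas) measurable
  ultimately show ?thesis unfolding ereal_cond_exp_def
    by eventually_elim (metis ereal_pos_part_minus_neg_part)
qed

lemma ereal_cond_exp_zero: "AE \<omega> in M. ereal_cond_exp M F (\<lambda>_. 0) \<omega> = 0"
  using ereal_cond_exp_F_meas[of "\<lambda>_. 0"] by simp

lemma nn_cond_exp_local:
  assumes [measurable]: "f \<in> borel_measurable M" "g \<in> borel_measurable M" "A \<in> sets F"
    and eq: "AE \<omega> in M. \<omega> \<in> A \<longrightarrow> f \<omega> = g \<omega>"
  shows "AE \<omega> in M. \<omega> \<in> A \<longrightarrow> nn_cond_exp M F f \<omega> = nn_cond_exp M F g \<omega>"
proof -
  have "A \<in> sets M" using assms(3) subalg by (auto simp: subalgebra_def)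
  then have "AE x in M. nn_cond_exp M F (\<lambda>x. indicator A x * f x) x = nn_cond_exp M F (\<lambda>x. indicator A x * g x) x"
    using eq by (intro nn_cond_exp_cong) (auto elim!: eventually_mono simp: indicator_def)
  moreover have "AE x in M. indicator A x * nn_cond_exp M F f x = nn_cond_exp M F (\<lambda>x. indicator A x * f x) x"
    by (rule nn_cond_exp_prod) auto
  moreover have "AE x in M. indicator A x * nn_cond_exp M F g x = nn_cond_exp M F (\<lambda>x. indicator A x * g x) x"
    by (rule nn_cond_exp_prod) auto
  ultimately show ?thesis by eventually_elim (auto simp: indicator_def)
qed

lemma ereal_cond_exp_local:
  assumes [measurable]: "X \<in> borel_measurable M" "Y \<in> borel_measurable M" "A \<in> sets F"
    and eq: "AE \<omega> in M. \<omega> \<in> A \<longrightarrow> X \<omega> = Y \<omega>"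
  shows "AE \<omega> in M. \<omega> \<in> A \<longrightarrow> ereal_cond_exp M F X \<omega> = ereal_cond_exp M F Y \<omega>"
proof -
  have "AE \<omega> in M. \<omega> \<in> A \<longrightarrow> nn_cond_exp M F (\<lambda>x. e2ennreal (X x)) \<omega> = nn_cond_exp M F (\<lambda>x. e2ennreal (Y x)) \<omega>"
    by (rule nn_cond_exp_local) (use eq in \<open>auto elim!: eventually_mono\<close>)
  moreover have "AE \<omega> in M. \<omega> \<in> A \<longrightarrow> nn_cond_exp M F (\<lambda>x. e2ennreal (- X x)) \<omega> = nn_cond_exp M F (\<lambda>x. e2ennreal (- Y x)) \<omega>"
    by (rule nn_cond_exp_local) (use eq in \<open>auto elim!: eventually_mono\<close>)
  ultimately show ?thesis unfolding ereal_cond_exp_def by eventually_elim auto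
qed

lemma ereal_cond_exp_nonneg:
  assumes [measurable]: "X \<in> borel_measurable M" and nonneg: "AE \<omega> in M. 0 \<le> X \<omega>"
  shows "AE \<omega> in M. ereal_cond_exp M F X \<omega> = enn2ereal (nn_cond_exp M F (\<lambda>x. e2ennreal (X x)) \<omega>)"
proof -
  have "AE \<omega> in M. nn_cond_exp M F (\<lambda>x. e2ennreal (- X x)) \<omega> = nn_cond_exp M F (\<lambda>_. 0) \<omega>"
    by (rule nn_cond_exp_cong) (use nonneg in \<open>auto elim!: eventually_mono intro: e2ennreal_neg\<close>)
  moreover have "AE \<omega> in M. nn_cond_exp M F (\<lambda>_. 0) \<omega> = 0"
    using nn_cond_exp_F_meas[of "\<lambda>_. 0"] by (auto elim!: eventually_mono)
  ultimately show ?thesis unfolding ereal_cond_exp_def by eventually_elim simp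
qed

lemma nn_cond_exp_monotone_convergence:
  fixes f :: "nat \<Rightarrow> 'a \<Rightarrow> ennreal"
  assumes [measurable]: "\<And>k. f k \<in> borel_measurable M" and inc: "AE \<omega> in M. incseq (\<lambda>k. f k \<omega>)"
  shows "AE \<omega> in M. nn_cond_exp M F (\<lambda>\<omega>. SUP k. f k \<omega>) \<omega> = (SUP k. nn_cond_exp M F (f k) \<omega>)"
proof -
  have inc_cond_exp: "AE \<omega> in M. nn_cond_exp M F (f k) \<omega> \<le> nn_cond_exp M F (f (Suc k)) \<omega>" for k
    by (rule nn_cond_exp_mono) (use inc in \<open>auto elim!: eventually_mono simp: incseq_Suc_iff\<close>)
  have "AE \<omega> in M. (SUP k. nn_cond_exp M F (f k) \<omega>) = nn_cond_exp M F (\<lambda>\<omega>. SUP k. f k \<omega>) \<omega>"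
  proof (rule nn_cond_exp_charact)
    fix A assume [measurable]: "A \<in> sets F"
    then have [measurable]: "A \<in> sets M" using subalg by (auto simp: subalgebra_def)
    have "(\<integral>\<^sup>+ x \<in> A. (SUP k. f k x) \<partial>M) = (\<integral>\<^sup>+ x. (SUP k. f k x * indicator A x) \<partial>M)"
      by (simp add: SUP_mult_right_ennreal)
    also have "\<dots> = (SUP k. \<integral>\<^sup>+ x. f k x * indicator A x \<partial>M)"
      by (rule nn_integral_monotone_convergence_SUP_AE)
         (use inc in \<open>auto elim!: eventually_mono simp: incseq_Suc_iff intro: mult_right_mono\<close>)
    also have "\<dots> = (SUP k. \<integral>\<^sup>+ x. nn_cond_exp M F (f k) x * indicator A x \<partial>M)"
      using nn_cond_exp_intg[of "indicator A"] by (simp add: mult.commute)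
    also have "\<dots> = (\<integral>\<^sup>+ x. (SUP k. nn_cond_exp M F (f k) x * indicator A x) \<partial>M)"
    proof (rule nn_integral_monotone_convergence_SUP_AE[symmetric])
      fix k
      show "AE x in M. nn_cond_exp M F (f k) x * indicator A x \<le> nn_cond_exp M F (f (Suc k)) x * indicator A x"
        using inc_cond_exp[of k] by eventually_elim (auto intro: mult_right_mono)
    qed auto
    also have "\<dots> = (\<integral>\<^sup>+ x \<in> A. (SUP k. nn_cond_exp M F (f k) x) \<partial>M)"
      by (simp add: SUP_mult_right_ennreal)
    finally show "(\<integral>\<^sup>+ x \<in> A. (SUP k. f k x) \<partial>M) = (\<integral>\<^sup>+ x \<in> A. (SUP k. nn_cond_exp M F (f k) x) \<partial>M)" .
  qed auto
  then show ?thesis by (auto elim!: eventually_mono)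
qed

lemma nn_cond_exp_less_top_imp_less_top:
  assumes "finite_measure M" and [measurable]: "f \<in> borel_measurable M"
    and fin: "AE \<omega> in M. nn_cond_exp M F f \<omega> < top"
  shows "AE \<omega> in M. f \<omega> < top"
proof -
  interpret finite_measure M by fact
  have "AE \<omega> in M. nn_cond_exp M F f \<omega> \<le> of_nat k \<longrightarrow> f \<omega> < top" for k :: nat
  proof -
    define B where "B = {x\<in>space M. nn_cond_exp M F f x \<le> of_nat k}"
    have "{x\<in>space F. nn_cond_exp M F f x \<le> of_nat k} \<in> sets F" by measurable
    moreover have "space F = space M" using subalg by (simp add: subalgebra_def)
    ultimately have [measurable]: "B \<in> sets F" unfolding B_def by simp
    then have [measurable]: "B \<in> sets M" using subalg by (auto simp: subalgebra_def)
    have "(\<integral>\<^sup>+ x. indicator B x * f x \<partial>M) = (\<integral>\<^sup>+ x. indicator B x * nn_cond_exp M F f x \<partial>M)"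
      by (rule nn_cond_exp_intg[symmetric]) auto
    also have "\<dots> \<le> (\<integral>\<^sup>+ x. of_nat k \<partial>M)"
      by (rule nn_integral_mono) (auto simp: B_def indicator_def)
    also have "\<dots> < top"
      using emeasure_finite[of "space M"]
      by (simp add: ennreal_mult_eq_top_iff of_nat_less_top less_top[symmetric])
    finally have "AE x in M. indicator B x * f x \<noteq> \<infinity>"
      by (intro nn_integral_PInf_AE) (auto simp: infinity_ennreal_def)
    with AE_space show ?thesis
      by eventually_elim (auto simp: B_def indicator_def less_top infinity_ennreal_def)
  qed
  then have "AE \<omega> in M. \<forall>k::nat. nn_cond_exp M F f \<omega> \<le> of_nat k \<longrightarrow> f \<omega> < top"
    by (subst AE_all_countable) blast
  with fin show ?thesis
  proof eventually_elim
    case (elim \<omega>)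
    then obtain n :: nat where "nn_cond_exp M F f \<omega> < of_nat n" using ennreal_Ex_less_of_nat by blast
    with elim show ?case by (meson less_imp_le)
  qed
qed

text \<open>A variable bounded below by \<open>-G\<close> with \<open>G\<close> integrable is handled through the nonnegative
  variable \<open>X + G\<close>: \<open>E[X|F] = E[X + G|F] - E[G|F]\<close>, where \<open>E[G|F]\<close> is a.e.\ finite.\<close>

lemma ereal_cond_exp_shift:
  assumes [measurable]: "X \<in> borel_measurable M" "G \<in> borel_measurable M"
    and G_int: "(\<integral>\<^sup>+\<omega>. G \<omega> \<partial>M) < top"
    and lower: "AE \<omega> in M. - enn2ereal (G \<omega>) \<le> X \<omega>"
  shows "AE \<omega> in M. nn_cond_exp M F G \<omega> < top \<and>
     ereal_cond_exp M F X \<omega> = enn2ereal (nn_cond_exp M F (\<lambda>\<omega>. e2ennreal (X \<omega> + enn2ereal (G \<omega>))) \<omega>)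
       - enn2ereal (nn_cond_exp M F G \<omega>)"
proof -
  have G_fin: "AE \<omega> in M. G \<omega> < top"
    using nn_integral_PInf_AE[of G M] G_int by (auto simp: less_top)
  have "(\<integral>\<^sup>+\<omega>. nn_cond_exp M F G \<omega> \<partial>M) < top" using G_int nn_integral_nn_cond_exp by simp
  then have cond_G_fin: "AE \<omega> in M. nn_cond_exp M F G \<omega> < top"
    using nn_integral_PInf_AE[of "nn_cond_exp M F G" M] by (auto simp: less_top)
  have "AE \<omega> in M. e2ennreal (X \<omega>) + G \<omega> = e2ennreal (X \<omega> + enn2ereal (G \<omega>)) + e2ennreal (- X \<omega>)"
    using lower G_fin by eventually_elim (rule e2ennreal_add_shift)
  then have 1: "AE \<omega> in M. nn_cond_exp M F (\<lambda>x. e2ennreal (X x) + G x) \<omega>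
      = nn_cond_exp M F (\<lambda>x. e2ennreal (X x + enn2ereal (G x)) + e2ennreal (- X x)) \<omega>"
    by (intro nn_cond_exp_cong) auto
  have 2: "AE \<omega> in M. nn_cond_exp M F (\<lambda>x. e2ennreal (X x)) \<omega> + nn_cond_exp M F G \<omega>
      = nn_cond_exp M F (\<lambda>x. e2ennreal (X x) + G x) \<omega>"
    by (rule nn_cond_exp_sum) auto
  have 3: "AE \<omega> in M. nn_cond_exp M F (\<lambda>x. e2ennreal (X x + enn2ereal (G x))) \<omega>
        + nn_cond_exp M F (\<lambda>x. e2ennreal (- X x)) \<omega>
      = nn_cond_exp M F (\<lambda>x. e2ennreal (X x + enn2ereal (G x)) + e2ennreal (- X x)) \<omega>"
    by (rule nn_cond_exp_sum) auto
  have "AE \<omega> in M. e2ennreal (- X \<omega>) \<le> G \<omega>"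
    using lower by eventually_elim
      (metis e2ennreal_enn2ereal e2ennreal_mono ereal_uminus_le_reorder)
  then have 4: "AE \<omega> in M. nn_cond_exp M F (\<lambda>x. e2ennreal (- X x)) \<omega> \<le> nn_cond_exp M F G \<omega>"
    by (intro nn_cond_exp_mono) auto
  from 1 2 3 4 cond_G_fin show ?thesis unfolding ereal_cond_exp_def
  proof eventually_elim
    case (elim \<omega>)
    let ?g = "nn_cond_exp M F G \<omega>" and ?c = "nn_cond_exp M F (\<lambda>x. e2ennreal (- X x)) \<omega>"
    have "enn2ereal (nn_cond_exp M F (\<lambda>x. e2ennreal (X x)) \<omega>) + enn2ereal ?g
      = enn2ereal (nn_cond_exp M F (\<lambda>x. e2ennreal (X x + enn2ereal (G x))) \<omega>) + enn2ereal ?c"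
      using elim(1-3) by (simp flip: plus_ennreal.rep_eq)
    moreover have "?c < top" using elim(4,5) by (rule le_less_trans)
    ultimately show ?case
      using elim(5) by (intro conjI ereal_diff_eq_of_add_eq abs_enn2ereal_less_top) auto
  qed
qed

lemma ereal_cond_exp_lower_bound:
  assumes [measurable]: "X \<in> borel_measurable M" "G \<in> borel_measurable M"
    and "(\<integral>\<^sup>+\<omega>. G \<omega> \<partial>M) < top" "AE \<omega> in M. - enn2ereal (G \<omega>) \<le> X \<omega>"
  shows "AE \<omega> in M. - enn2ereal (nn_cond_exp M F G \<omega>) \<le> ereal_cond_exp M F X \<omega>"
  using ereal_cond_exp_shift[OF assms]
proof eventually_elim
  case (elim \<omega>)
  let ?a = "enn2ereal (nn_cond_exp M F (\<lambda>\<omega>. e2ennreal (X \<omega> + enn2ereal (G \<omega>))) \<omega>)"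
  have "\<bar>enn2ereal (nn_cond_exp M F G \<omega>)\<bar> \<noteq> \<infinity>" using elim by (intro abs_enn2ereal_less_top) auto
  moreover have "0 \<le> ?a" by simp
  ultimately show ?case using elim by (cases "enn2ereal (nn_cond_exp M F G \<omega>)"; cases ?a) auto
qed

lemma e2ennreal_ereal_cond_exp_add:
  assumes [measurable]: "X \<in> borel_measurable M" "G \<in> borel_measurable M"
    and G_int: "(\<integral>\<^sup>+\<omega>. G \<omega> \<partial>M) < top"
    and lower: "AE \<omega> in M. - enn2ereal (G \<omega>) \<le> X \<omega>"
  shows "AE \<omega> in M. e2ennreal (ereal_cond_exp M F X \<omega> + enn2ereal (nn_cond_exp M F G \<omega>))
    = nn_cond_exp M F (\<lambda>\<omega>. e2ennreal (X \<omega> + enn2ereal (G \<omega>))) \<omega>"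
  using ereal_cond_exp_shift[OF assms]
proof eventually_elim
  case (elim \<omega>)
  let ?a = "enn2ereal (nn_cond_exp M F (\<lambda>\<omega>. e2ennreal (X \<omega> + enn2ereal (G \<omega>))) \<omega>)"
    and ?g = "enn2ereal (nn_cond_exp M F G \<omega>)"
  have "\<bar>?g\<bar> \<noteq> \<infinity>" using elim by (intro abs_enn2ereal_less_top) auto
  then have "?a - ?g + ?g = ?a" by (cases ?g; cases ?a) auto
  with elim show ?case by simp
qed

lemma ereal_cond_exp_monotone_convergence:
  fixes Y :: "nat \<Rightarrow> 'a \<Rightarrow> ereal"
  assumes [measurable]: "\<And>k. Y k \<in> borel_measurable M" "G \<in> borel_measurable M"
    and G_int: "(\<integral>\<^sup>+\<omega>. G \<omega> \<partial>M) < top"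
    and lower: "\<And>k. AE \<omega> in M. - enn2ereal (G \<omega>) \<le> Y k \<omega>"
    and inc: "AE \<omega> in M. incseq (\<lambda>k. Y k \<omega>)"
  shows "AE \<omega> in M. ereal_cond_exp M F (\<lambda>\<omega>. SUP k. Y k \<omega>) \<omega> = (SUP k. ereal_cond_exp M F (Y k) \<omega>)"
proof -
  define Z where "Z k \<omega> = e2ennreal (Y k \<omega> + enn2ereal (G \<omega>))" for k \<omega>
  have [measurable]: "Z k \<in> borel_measurable M" for k unfolding Z_def by measurable
  have shift: "AE \<omega> in M. \<forall>k. nn_cond_exp M F G \<omega> < top \<and>
      ereal_cond_exp M F (Y k) \<omega> = enn2ereal (nn_cond_exp M F (Z k) \<omega>) - enn2ereal (nn_cond_exp M F G \<omega>)"
    unfolding AE_all_countable Z_def by (intro allI ereal_cond_exp_shift G_int lower) measurable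
  have "AE \<omega> in M. - enn2ereal (G \<omega>) \<le> (SUP k. Y k \<omega>)"
    using lower[of 0] by eventually_elim (auto intro: SUP_upper2)
  then have shift_SUP: "AE \<omega> in M. ereal_cond_exp M F (\<lambda>\<omega>. SUP k. Y k \<omega>) \<omega> =
      enn2ereal (nn_cond_exp M F (\<lambda>\<omega>. e2ennreal ((SUP k. Y k \<omega>) + enn2ereal (G \<omega>))) \<omega>)
      - enn2ereal (nn_cond_exp M F G \<omega>)"
    using ereal_cond_exp_shift[of "\<lambda>\<omega>. SUP k. Y k \<omega>" G] G_int by (auto elim: eventually_mono)
  have G_fin: "AE \<omega> in M. G \<omega> < top"
    using nn_integral_PInf_AE[of G M] G_int by (auto simp: less_top)
  then have "AE \<omega> in M. e2ennreal ((SUP k. Y k \<omega>) + enn2ereal (G \<omega>)) = (SUP k. Z k \<omega>)"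
    unfolding Z_def by eventually_elim (intro e2ennreal_SUP_add abs_enn2ereal_less_top)
  then have "AE \<omega> in M. nn_cond_exp M F (\<lambda>\<omega>. e2ennreal ((SUP k. Y k \<omega>) + enn2ereal (G \<omega>))) \<omega>
      = nn_cond_exp M F (\<lambda>\<omega>. SUP k. Z k \<omega>) \<omega>"
    by (intro nn_cond_exp_cong) auto
  moreover have "AE \<omega> in M. incseq (\<lambda>k. Z k \<omega>)"
    using inc by eventually_elim (auto simp: incseq_def Z_def intro!: e2ennreal_mono add_right_mono)
  then have "AE \<omega> in M. nn_cond_exp M F (\<lambda>\<omega>. SUP k. Z k \<omega>) \<omega> = (SUP k. nn_cond_exp M F (Z k) \<omega>)"
    by (intro nn_cond_exp_monotone_convergence) auto
  ultimately show ?thesis using shift shift_SUP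
  proof eventually_elim
    case (elim \<omega>)
    have "\<bar>enn2ereal (nn_cond_exp M F G \<omega>)\<bar> \<noteq> \<infinity>"
      using elim(3) by (intro abs_enn2ereal_less_top) auto
    then show ?case
      using elim by (simp add: enn2ereal_SUP minus_ereal_def SUP_ereal_add_left[symmetric])
  qed
qed

lemma ereal_cond_exp_nested_subalg:
  assumes "subalgebra M N" "subalgebra N F"
    and [measurable]: "X \<in> borel_measurable M" "G \<in> borel_measurable M"
    and G_int: "(\<integral>\<^sup>+\<omega>. G \<omega> \<partial>M) < top"
    and lower: "AE \<omega> in M. - enn2ereal (G \<omega>) \<le> X \<omega>"
  shows "AE \<omega> in M. ereal_cond_exp M F (ereal_cond_exp M N X) \<omega> = ereal_cond_exp M F X \<omega>"
proof -
  interpret N: sigma_finite_subalgebra M N by (rule nested_subalg_is_sigma_finite[OF assms(1,2)])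
  define Z where "Z \<omega> = e2ennreal (X \<omega> + enn2ereal (G \<omega>))" for \<omega>
  define G' where "G' = nn_cond_exp M N G"
  have [measurable]: "Z \<in> borel_measurable M" "G' \<in> borel_measurable M"
    unfolding Z_def G'_def by measurable
  have [measurable]: "ereal_cond_exp M N X \<in> borel_measurable M"
    using measurable_from_subalg[OF assms(1) N.ereal_cond_exp_measurable] .
  have G'_int: "(\<integral>\<^sup>+\<omega>. G' \<omega> \<partial>M) < top" using G_int N.nn_integral_nn_cond_exp G'_def by simp
  have lower_N: "AE \<omega> in M. - enn2ereal (G' \<omega>) \<le> ereal_cond_exp M N X \<omega>"
    unfolding G'_def by (rule N.ereal_cond_exp_lower_bound[OF _ _ G_int lower]) auto
  have "AE \<omega> in M. e2ennreal (ereal_cond_exp M N X \<omega> + enn2ereal (G' \<omega>)) = nn_cond_exp M N Z \<omega>"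
    unfolding G'_def Z_def by (rule N.e2ennreal_ereal_cond_exp_add[OF _ _ G_int lower]) auto
  then have "AE \<omega> in M. nn_cond_exp M F (\<lambda>\<omega>. e2ennreal (ereal_cond_exp M N X \<omega> + enn2ereal (G' \<omega>))) \<omega>
      = nn_cond_exp M F (nn_cond_exp M N Z) \<omega>"
    by (intro nn_cond_exp_cong) auto
  moreover have "AE \<omega> in M. nn_cond_exp M F Z \<omega> = nn_cond_exp M F (nn_cond_exp M N Z) \<omega>"
    by (rule nn_cond_exp_nested_subalg[OF assms(1,2)]) simp
  moreover have "AE \<omega> in M. nn_cond_exp M F G \<omega> = nn_cond_exp M F G' \<omega>"
    unfolding G'_def by (rule nn_cond_exp_nested_subalg[OF assms(1,2)]) simp
  moreover have "AE \<omega> in M. nn_cond_exp M F G' \<omega> < top \<and> ereal_cond_exp M F (ereal_cond_exp M N X) \<omega>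
      = enn2ereal (nn_cond_exp M F (\<lambda>\<omega>. e2ennreal (ereal_cond_exp M N X \<omega> + enn2ereal (G' \<omega>))) \<omega>)
        - enn2ereal (nn_cond_exp M F G' \<omega>)"
    by (rule ereal_cond_exp_shift[OF _ _ G'_int lower_N]) auto
  moreover have "AE \<omega> in M. nn_cond_exp M F G \<omega> < top \<and> ereal_cond_exp M F X \<omega>
      = enn2ereal (nn_cond_exp M F Z \<omega>) - enn2ereal (nn_cond_exp M F G \<omega>)"
    unfolding Z_def by (rule ereal_cond_exp_shift[OF _ _ G_int lower]) auto
  ultimately show ?thesis by eventually_elim simp
qed

end

section \<open>Stopping times and their \<open>\<sigma>\<close>-algebras\<close>

locale std_filtered_space =
  fixes M :: "'a measure" and F :: "real \<Rightarrow> 'a measure" and Tm :: real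
  assumes std_setting: "std_setting M F Tm"
begin

lemma prob_space_M: "prob_space M" and Tm_pos: "0 < Tm" and filtration_F: "filtration (space M) F"
  and sets_F_Tm: "sets (F Tm) = sets M"
  and null_subset_sets_F0: "N \<in> null_sets M \<Longrightarrow> A \<subseteq> N \<Longrightarrow> A \<in> sets (F 0)"
  using std_setting unfolding std_setting_def by auto

interpretation prob_space M by (rule prob_space_M)

lemma space_F[simp]: "space (F t) = space M"
  using filtration.space_F[OF filtration_F] .

lemma sets_F_mono: "s \<le> t \<Longrightarrow> sets (F s) \<subseteq> sets (F t)"
  using filtration.sets_F_mono[OF filtration_F] by blast

lemma STs_stopping_time: "\<theta> \<in> STs M F Tm \<Longrightarrow> stopping_time F \<theta>"
  unfolding STs_def by auto

lemma STs_bounds: "\<theta> \<in> STs M F Tm \<Longrightarrow> \<omega> \<in> space M \<Longrightarrow> 0 \<le> \<theta> \<omega> \<and> \<theta> \<omega> \<le> Tm"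
  unfolding STs_def by auto

lemma const_in_STs: "0 \<le> c \<Longrightarrow> c \<le> Tm \<Longrightarrow> (\<lambda>_. c) \<in> STs M F Tm"
  unfolding STs_def by (auto intro: stopping_time_const)

lemma Tm_in_STs: "(\<lambda>_. Tm) \<in> STs M F Tm"
  using const_in_STs Tm_pos by simp

lemma zero_in_STs: "(\<lambda>_. 0) \<in> STs M F Tm"
  using const_in_STs Tm_pos by simp

lemma STs_le_in_sets_F: "\<theta> \<in> STs M F Tm \<Longrightarrow> {\<omega>\<in>space M. \<theta> \<omega> \<le> t} \<in> sets (F t)"
  using stopping_timeD[OF STs_stopping_time] unfolding pred_def by simp

lemma sets_Fsig: "\<theta> \<in> STs M F Tm \<Longrightarrow> sets (Fsig M F \<theta>) = {A. \<forall>t. {\<omega>\<in>A. \<theta> \<omega> \<le> t} \<in> sets (F t)}"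
  unfolding Fsig_def using filtration.sets_pre_sigma[OF filtration_F STs_stopping_time] .

lemma space_Fsig[simp]: "space (Fsig M F \<theta>) = space M"
  unfolding Fsig_def using filtration.space_pre_sigma[OF filtration_F] .

lemma sets_Fsig_subset:
  assumes "\<theta> \<in> STs M F Tm" shows "sets (Fsig M F \<theta>) \<subseteq> sets M"
proof
  fix A assume A: "A \<in> sets (Fsig M F \<theta>)"
  then have "{\<omega>\<in>A. \<theta> \<omega> \<le> Tm} = A"
    using sets.sets_into_space[OF A] STs_bounds[OF assms] by auto
  moreover have "{\<omega>\<in>A. \<theta> \<omega> \<le> Tm} \<in> sets (F Tm)" using A sets_Fsig[OF assms] by auto
  ultimately show "A \<in> sets M" using sets_F_Tm by simp
qed

lemma subalgebra_Fsig: "\<theta> \<in> STs M F Tm \<Longrightarrow> subalgebra M (Fsig M F \<theta>)"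
  unfolding subalgebra_def using sets_Fsig_subset by simp

lemma sigma_finite_subalgebra_Fsig: "\<theta> \<in> STs M F Tm \<Longrightarrow> sigma_finite_subalgebra M (Fsig M F \<theta>)"
  by (intro finite_measure_subalgebra_is_sigma_finite finite_measure_subalgebra.intro
       finite_measure_subalgebra_axioms.intro subalgebra_Fsig) (rule finite_measure_axioms)

lemma esssup_subalgebra_Fsig: "\<theta> \<in> STs M F Tm \<Longrightarrow> esssup_subalgebra M (Fsig M F \<theta>)"
  by (intro esssup_subalgebra.intro subalgebra_Fsig) (rule finite_measure_axioms)

lemma esssup_subalgebra_M: "esssup_subalgebra M M"
  by (intro esssup_subalgebra.intro) (auto simp: subalgebra_def finite_measure_axioms)

lemma measurable_Fsig_M:
  "\<theta> \<in> STs M F Tm \<Longrightarrow> f \<in> borel_measurable (Fsig M F \<theta>) \<Longrightarrow> f \<in> borel_measurable M"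
  using measurable_from_subalg[OF subalgebra_Fsig] by blast

text \<open>The usual conditions are used here: null sets lie in \<open>F 0\<close>, so \<open>\<F>\<^sub>\<theta>\<close> only depends on
  the a.e.\ class of \<open>\<theta>\<close>.\<close>

lemma sets_Fsig_mono:
  assumes \<theta>: "\<theta> \<in> STs M F Tm" and \<theta>': "\<theta>' \<in> STs M F Tm" and le: "AE \<omega> in M. \<theta>' \<omega> \<le> \<theta> \<omega>"
  shows "sets (Fsig M F \<theta>') \<subseteq> sets (Fsig M F \<theta>)"
proof
  fix A assume A: "A \<in> sets (Fsig M F \<theta>')"
  have A_space: "A \<subseteq> space M" using sets.sets_into_space[OF A] by simp
  obtain N where N: "N \<in> null_sets M" "{\<omega>\<in>space M. \<not> \<theta>' \<omega> \<le> \<theta> \<omega>} \<subseteq> N"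
    using le by (auto elim!: AE_E)
  show "A \<in> sets (Fsig M F \<theta>)"
    unfolding sets_Fsig[OF \<theta>]
  proof (intro CollectI allI)
    fix t
    have "{\<omega>\<in>A. \<theta>' \<omega> \<le> t} \<in> sets (F t)" using A sets_Fsig[OF \<theta>'] by auto
    moreover have "{\<omega>\<in>space M. \<theta> \<omega> \<le> t} \<in> sets (F t)" using STs_le_in_sets_F[OF \<theta>] .
    moreover have "{\<omega>\<in>A. \<theta> \<omega> \<le> t \<and> t < \<theta>' \<omega>} \<in> sets (F t)"
    proof (cases "0 \<le> t")
      case True
      have "{\<omega>\<in>A. \<theta> \<omega> \<le> t \<and> t < \<theta>' \<omega>} \<subseteq> N" using N(2) A_space by auto
      then have "{\<omega>\<in>A. \<theta> \<omega> \<le> t \<and> t < \<theta>' \<omega>} \<in> sets (F 0)" by (rule null_subset_sets_F0[OF N(1)])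
      then show ?thesis using sets_F_mono[OF True] by blast
    next
      case False
      have "t < \<theta> \<omega>" if "\<omega> \<in> A" for \<omega>
        using STs_bounds[OF \<theta>, of \<omega>] A_space that False by auto
      then have "{\<omega>\<in>A. \<theta> \<omega> \<le> t \<and> t < \<theta>' \<omega>} = {}" by force
      then show ?thesis by (metis sets.empty_sets)
    qed
    moreover have "{\<omega>\<in>A. \<theta> \<omega> \<le> t} = ({\<omega>\<in>A. \<theta>' \<omega> \<le> t} \<inter> {\<omega>\<in>space M. \<theta> \<omega> \<le> t})
        \<union> {\<omega>\<in>A. \<theta> \<omega> \<le> t \<and> t < \<theta>' \<omega>}"
      using A_space by auto
    ultimately show "{\<omega>\<in>A. \<theta> \<omega> \<le> t} \<in> sets (F t)" by auto
  qed
qed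

lemma min_stopping_time_measurable:
  assumes "\<theta> \<in> STs M F Tm" shows "(\<lambda>\<omega>. min (\<theta> \<omega>) t) \<in> borel_measurable (F t)"
proof (rule borel_measurableI_le)
  fix s
  show "{\<omega>\<in>space (F t). min (\<theta> \<omega>) t \<le> s} \<in> sets (F t)"
  proof (cases "t \<le> s")
    case True
    then show ?thesis using sets.top[of "F t"] by (simp add: min_le_iff_disj)
  next
    case False
    then have "{\<omega>\<in>space (F t). min (\<theta> \<omega>) t \<le> s} = {\<omega>\<in>space M. \<theta> \<omega> \<le> s}" by auto
    then show ?thesis using STs_le_in_sets_F[OF assms, of s] sets_F_mono[of s t] False by auto
  qed
qed

lemma eq_stopping_times_in_Fsig:
  assumes \<theta>: "\<theta> \<in> STs M F Tm" and \<theta>': "\<theta>' \<in> STs M F Tm"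
  shows "{\<omega>\<in>space M. \<theta> \<omega> = \<theta>' \<omega>} \<in> sets (Fsig M F \<theta>)"
  unfolding sets_Fsig[OF \<theta>]
proof (intro CollectI allI)
  fix t
  have [measurable]: "(\<lambda>\<omega>. min (\<theta> \<omega>) t) \<in> borel_measurable (F t)" "(\<lambda>\<omega>. min (\<theta>' \<omega>) t) \<in> borel_measurable (F t)"
    using min_stopping_time_measurable \<theta> \<theta>' by auto
  have [measurable]: "{\<omega>\<in>space (F t). \<theta> \<omega> \<le> t} \<in> sets (F t)" "{\<omega>\<in>space (F t). \<theta>' \<omega> \<le> t} \<in> sets (F t)"
    using STs_le_in_sets_F \<theta> \<theta>' by auto
  have "{\<omega>\<in>space (F t). min (\<theta> \<omega>) t = min (\<theta>' \<omega>) t} \<inter> {\<omega>\<in>space (F t). \<theta> \<omega> \<le> t}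
      \<inter> {\<omega>\<in>space (F t). \<theta>' \<omega> \<le> t} \<in> sets (F t)" by measurable
  moreover have "{\<omega>\<in>space (F t). min (\<theta> \<omega>) t = min (\<theta>' \<omega>) t} \<inter> {\<omega>\<in>space (F t). \<theta> \<omega> \<le> t}
      \<inter> {\<omega>\<in>space (F t). \<theta>' \<omega> \<le> t} = {\<omega>\<in>{\<omega>\<in>space M. \<theta> \<omega> = \<theta>' \<omega>}. \<theta> \<omega> \<le> t}"
    by (auto simp: min_def)
  ultimately show "{\<omega>\<in>{\<omega>\<in>space M. \<theta> \<omega> = \<theta>' \<omega>}. \<theta> \<omega> \<le> t} \<in> sets (F t)" by simp
qed

lemma Fsig_Int_eq_stopping_times:
  assumes \<theta>: "\<theta> \<in> STs M F Tm" and \<theta>': "\<theta>' \<in> STs M F Tm" and C: "C \<in> sets (Fsig M F \<theta>)"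
  shows "C \<inter> {\<omega>\<in>space M. \<theta> \<omega> = \<theta>' \<omega>} \<in> sets (Fsig M F \<theta>')"
  unfolding sets_Fsig[OF \<theta>']
proof (intro CollectI allI)
  fix t
  have "{\<omega>\<in>{\<omega>\<in>space M. \<theta> \<omega> = \<theta>' \<omega>}. \<theta> \<omega> \<le> t} \<in> sets (F t)"
    using eq_stopping_times_in_Fsig[OF \<theta> \<theta>'] sets_Fsig[OF \<theta>] by auto
  moreover have "{\<omega>\<in>C. \<theta> \<omega> \<le> t} \<in> sets (F t)" using C sets_Fsig[OF \<theta>] by auto
  ultimately have "{\<omega>\<in>C. \<theta> \<omega> \<le> t} \<inter> {\<omega>\<in>{\<omega>\<in>space M. \<theta> \<omega> = \<theta>' \<omega>}. \<theta> \<omega> \<le> t} \<in> sets (F t)"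
    by auto
  moreover have "{\<omega>\<in>C. \<theta> \<omega> \<le> t} \<inter> {\<omega>\<in>{\<omega>\<in>space M. \<theta> \<omega> = \<theta>' \<omega>}. \<theta> \<omega> \<le> t}
      = {\<omega>\<in>C \<inter> {\<omega>\<in>space M. \<theta> \<omega> = \<theta>' \<omega>}. \<theta>' \<omega> \<le> t}" by auto
  ultimately show "{\<omega>\<in>C \<inter> {\<omega>\<in>space M. \<theta> \<omega> = \<theta>' \<omega>}. \<theta>' \<omega> \<le> t} \<in> sets (F t)" by simp
qed

lemma if_in_STs:
  assumes \<tau>1: "\<tau>1 \<in> STs M F Tm" and \<tau>2: "\<tau>2 \<in> STs M F Tm"
    and A: "A \<in> sets (Fsig M F \<tau>1)" and A_compl: "space M - A \<in> sets (Fsig M F \<tau>2)"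
  shows "(\<lambda>\<omega>. if \<omega> \<in> A then \<tau>1 \<omega> else \<tau>2 \<omega>) \<in> STs M F Tm"
proof -
  have A_space: "A \<subseteq> space M" using sets.sets_into_space[OF A] by simp
  have "stopping_time F (\<lambda>\<omega>. if \<omega> \<in> A then \<tau>1 \<omega> else \<tau>2 \<omega>)"
  proof (rule stopping_timeI)
    fix t
    have "{\<omega>\<in>A. \<tau>1 \<omega> \<le> t} \<in> sets (F t)" using A sets_Fsig[OF \<tau>1] by auto
    moreover have "{\<omega>\<in>space M - A. \<tau>2 \<omega> \<le> t} \<in> sets (F t)" using A_compl sets_Fsig[OF \<tau>2] by auto
    ultimately have "{\<omega>\<in>A. \<tau>1 \<omega> \<le> t} \<union> {\<omega>\<in>space M - A. \<tau>2 \<omega> \<le> t} \<in> sets (F t)" by auto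
    moreover have "{\<omega>\<in>A. \<tau>1 \<omega> \<le> t} \<union> {\<omega>\<in>space M - A. \<tau>2 \<omega> \<le> t}
       = {\<omega>\<in>space (F t). (if \<omega> \<in> A then \<tau>1 \<omega> else \<tau>2 \<omega>) \<le> t}" using A_space by auto
    ultimately show "Measurable.pred (F t) (\<lambda>\<omega>. (if \<omega> \<in> A then \<tau>1 \<omega> else \<tau>2 \<omega>) \<le> t)"
      unfolding pred_def by metis
  qed
  then show ?thesis using \<tau>1 \<tau>2 unfolding STs_def by auto
qed

lemma if_eq_stopping_times_measurable:
  fixes h :: "'a \<Rightarrow> 'b::topological_space"
  assumes \<theta>: "\<theta> \<in> STs M F Tm" and \<theta>': "\<theta>' \<in> STs M F Tm" and h: "h \<in> borel_measurable (Fsig M F \<theta>)"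
  shows "(\<lambda>\<omega>. if \<theta> \<omega> = \<theta>' \<omega> then h \<omega> else c) \<in> borel_measurable (Fsig M F \<theta>')"
proof (rule measurableI)
  fix B :: "'b set" assume B: "B \<in> sets borel"
  define A where "A = {\<omega>\<in>space M. \<theta> \<omega> = \<theta>' \<omega>}"
  have "A = {\<omega>\<in>space M. \<theta>' \<omega> = \<theta> \<omega>}" unfolding A_def by auto
  then have "A \<in> sets (Fsig M F \<theta>')" using eq_stopping_times_in_Fsig[OF \<theta>' \<theta>] by simp
  then have "space M - A \<in> sets (Fsig M F \<theta>')" using sets.compl_sets by fastforce
  moreover have "(h -` B \<inter> space M) \<inter> A \<in> sets (Fsig M F \<theta>')"
    unfolding A_def using measurable_sets[OF h B] by (intro Fsig_Int_eq_stopping_times[OF \<theta> \<theta>']) simp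
  moreover have "(\<lambda>\<omega>. if \<theta> \<omega> = \<theta>' \<omega> then h \<omega> else c) -` B \<inter> space (Fsig M F \<theta>')
     = ((h -` B \<inter> space M) \<inter> A) \<union> (if c \<in> B then space M - A else {})"
    unfolding A_def by (auto split: if_splits)
  ultimately show "(\<lambda>\<omega>. if \<theta> \<omega> = \<theta>' \<omega> then h \<omega> else c) -` B \<inter> space (Fsig M F \<theta>') \<in> sets (Fsig M F \<theta>')"
    by auto
qed auto

lemma STs_fromD: "\<tau> \<in> STs_from M F Tm \<theta> \<Longrightarrow> \<tau> \<in> STs M F Tm \<and> (AE \<omega> in M. \<theta> \<omega> \<le> \<tau> \<omega>)"
  unfolding STs_from_def by auto

lemma STs_fromI: "\<tau> \<in> STs M F Tm \<Longrightarrow> (AE \<omega> in M. \<theta> \<omega> \<le> \<tau> \<omega>) \<Longrightarrow> \<tau> \<in> STs_from M F Tm \<theta>"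
  unfolding STs_from_def by auto

lemma self_in_STs_from: "\<theta> \<in> STs M F Tm \<Longrightarrow> \<theta> \<in> STs_from M F Tm \<theta>"
  by (rule STs_fromI) auto

lemma Tm_in_STs_from: "\<theta> \<in> STs M F Tm \<Longrightarrow> (\<lambda>_. Tm) \<in> STs_from M F Tm \<theta>"
  by (rule STs_fromI[OF Tm_in_STs]) (use STs_bounds in \<open>auto intro!: AE_I2\<close>)

lemma if_in_STs_from:
  assumes \<theta>: "\<theta> \<in> STs M F Tm" and A: "A \<in> sets (Fsig M F \<theta>)"
    and \<tau>1: "\<tau>1 \<in> STs_from M F Tm \<theta>" and \<tau>2: "\<tau>2 \<in> STs_from M F Tm \<theta>"
  shows "(\<lambda>\<omega>. if \<omega> \<in> A then \<tau>1 \<omega> else \<tau>2 \<omega>) \<in> STs_from M F Tm \<theta>"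
proof (rule STs_fromI)
  have \<tau>1': "\<tau>1 \<in> STs M F Tm" and \<theta>_le1: "AE \<omega> in M. \<theta> \<omega> \<le> \<tau>1 \<omega>" using STs_fromD[OF \<tau>1] by auto
  have \<tau>2': "\<tau>2 \<in> STs M F Tm" and \<theta>_le2: "AE \<omega> in M. \<theta> \<omega> \<le> \<tau>2 \<omega>" using STs_fromD[OF \<tau>2] by auto
  have "space M - A \<in> sets (Fsig M F \<theta>)" using sets.compl_sets[OF A] by simp
  then show "(\<lambda>\<omega>. if \<omega> \<in> A then \<tau>1 \<omega> else \<tau>2 \<omega>) \<in> STs M F Tm"
    using A sets_Fsig_mono[OF \<tau>1' \<theta> \<theta>_le1] sets_Fsig_mono[OF \<tau>2' \<theta> \<theta>_le2]
    by (intro if_in_STs[OF \<tau>1' \<tau>2']) auto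
  show "AE \<omega> in M. \<theta> \<omega> \<le> (if \<omega> \<in> A then \<tau>1 \<omega> else \<tau>2 \<omega>)"
    using \<theta>_le1 \<theta>_le2 by eventually_elim auto
qed

lemma if_eq_else_Tm_in_STs_from:
  assumes \<theta>: "\<theta> \<in> STs M F Tm" and \<theta>': "\<theta>' \<in> STs M F Tm" and \<tau>: "\<tau> \<in> STs_from M F Tm \<theta>"
  shows "(\<lambda>\<omega>. if \<omega> \<in> {\<omega>\<in>space M. \<theta> \<omega> = \<theta>' \<omega>} then \<tau> \<omega> else Tm) \<in> STs_from M F Tm \<theta>'"
proof (rule STs_fromI)
  have "(\<lambda>\<omega>. if \<omega> \<in> {\<omega>\<in>space M. \<theta> \<omega> = \<theta>' \<omega>} then \<tau> \<omega> else Tm) \<in> STs_from M F Tm \<theta>"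
    by (rule if_in_STs_from[OF \<theta> eq_stopping_times_in_Fsig[OF \<theta> \<theta>'] \<tau> Tm_in_STs_from[OF \<theta>]])
  then show "(\<lambda>\<omega>. if \<omega> \<in> {\<omega>\<in>space M. \<theta> \<omega> = \<theta>' \<omega>} then \<tau> \<omega> else Tm) \<in> STs M F Tm"
    using STs_fromD by blast
  show "AE \<omega> in M. \<theta>' \<omega> \<le> (if \<omega> \<in> {\<omega>\<in>space M. \<theta> \<omega> = \<theta>' \<omega>} then \<tau> \<omega> else Tm)"
  proof (rule AE_mp)
    show "AE \<omega> in M. \<theta> \<omega> \<le> \<tau> \<omega>" using STs_fromD[OF \<tau>] by blast
  qed (auto intro!: AE_I2 dest: STs_bounds[OF \<theta>'])
qed

lemma nn_cond_exp_Fsig_eq_on_eq: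
  assumes \<theta>: "\<theta> \<in> STs M F Tm" and \<theta>': "\<theta>' \<in> STs M F Tm" and [measurable]: "f \<in> borel_measurable M"
  shows "AE \<omega> in M. \<theta> \<omega> = \<theta>' \<omega> \<longrightarrow> nn_cond_exp M (Fsig M F \<theta>) f \<omega> = nn_cond_exp M (Fsig M F \<theta>') f \<omega>"
proof -
  interpret S: sigma_finite_subalgebra M "Fsig M F \<theta>" by (rule sigma_finite_subalgebra_Fsig[OF \<theta>])
  interpret S': sigma_finite_subalgebra M "Fsig M F \<theta>'" by (rule sigma_finite_subalgebra_Fsig[OF \<theta>'])
  define A where "A = {\<omega>\<in>space M. \<theta> \<omega> = \<theta>' \<omega>}"
  have "A = {\<omega>\<in>space M. \<theta>' \<omega> = \<theta> \<omega>}" unfolding A_def by auto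
  then have A': "A \<in> sets (Fsig M F \<theta>')" using eq_stopping_times_in_Fsig[OF \<theta>' \<theta>] by simp
  have [measurable]: "A \<in> sets M" using A' sets_Fsig_subset[OF \<theta>'] by auto
  define W where "W = (\<lambda>\<omega>. if \<theta> \<omega> = \<theta>' \<omega> then nn_cond_exp M (Fsig M F \<theta>) f \<omega> else 0)"
  have W_meas: "W \<in> borel_measurable (Fsig M F \<theta>')"
    unfolding W_def by (rule if_eq_stopping_times_measurable[OF \<theta> \<theta>']) simp
  have "AE \<omega> in M. W \<omega> = nn_cond_exp M (Fsig M F \<theta>') (\<lambda>\<omega>. indicator A \<omega> * f \<omega>) \<omega>"
  proof (rule S'.nn_cond_exp_charact)
    fix B assume B: "B \<in> sets (Fsig M F \<theta>')"
    have "B \<inter> A \<in> sets (Fsig M F \<theta>)"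
      using Fsig_Int_eq_stopping_times[OF \<theta>' \<theta> B] unfolding A_def by (simp add: eq_commute)
    then have [measurable]: "(\<lambda>x. indicator (B \<inter> A) x :: ennreal) \<in> borel_measurable (Fsig M F \<theta>)"
      by measurable
    have "(\<integral>\<^sup>+ x \<in> B. indicator A x * f x \<partial>M) = (\<integral>\<^sup>+ x. indicator (B \<inter> A) x * f x \<partial>M)"
      by (rule nn_integral_cong) (auto simp: indicator_def)
    also have "\<dots> = (\<integral>\<^sup>+ x. indicator (B \<inter> A) x * nn_cond_exp M (Fsig M F \<theta>) f x \<partial>M)"
      by (rule S.nn_cond_exp_intg[symmetric]) auto
    also have "\<dots> = (\<integral>\<^sup>+ x \<in> B. W x \<partial>M)"
      by (rule nn_integral_cong) (auto simp: indicator_def W_def A_def)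
    finally show "(\<integral>\<^sup>+ x \<in> B. indicator A x * f x \<partial>M) = (\<integral>\<^sup>+ x \<in> B. W x \<partial>M)" .
  qed (use W_meas in auto)
  moreover have "AE \<omega> in M. indicator A \<omega> * nn_cond_exp M (Fsig M F \<theta>') f \<omega>
      = nn_cond_exp M (Fsig M F \<theta>') (\<lambda>\<omega>. indicator A \<omega> * f \<omega>) \<omega>"
    by (rule S'.nn_cond_exp_prod) (use A' in measurable)
  ultimately show ?thesis using AE_space
    by eventually_elim (auto simp: W_def A_def indicator_def)
qed

lemma ereal_cond_exp_Fsig_eq_on_eq:
  assumes \<theta>: "\<theta> \<in> STs M F Tm" and \<theta>': "\<theta>' \<in> STs M F Tm" and [measurable]: "X \<in> borel_measurable M"
  shows "AE \<omega> in M. \<theta> \<omega> = \<theta>' \<omega> \<longrightarrow>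
    ereal_cond_exp M (Fsig M F \<theta>) X \<omega> = ereal_cond_exp M (Fsig M F \<theta>') X \<omega>"
proof -
  have "AE \<omega> in M. \<theta> \<omega> = \<theta>' \<omega> \<longrightarrow> nn_cond_exp M (Fsig M F \<theta>) (\<lambda>x. e2ennreal (X x)) \<omega>
      = nn_cond_exp M (Fsig M F \<theta>') (\<lambda>x. e2ennreal (X x)) \<omega>"
    by (rule nn_cond_exp_Fsig_eq_on_eq[OF \<theta> \<theta>']) measurable
  moreover have "AE \<omega> in M. \<theta> \<omega> = \<theta>' \<omega> \<longrightarrow> nn_cond_exp M (Fsig M F \<theta>) (\<lambda>x. e2ennreal (- X x)) \<omega>
      = nn_cond_exp M (Fsig M F \<theta>') (\<lambda>x. e2ennreal (- X x)) \<omega>"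
    by (rule nn_cond_exp_Fsig_eq_on_eq[OF \<theta> \<theta>']) measurable
  ultimately show ?thesis unfolding ereal_cond_exp_def by eventually_elim auto
qed

end

section \<open>Admissible families, supermartingale families and Snell envelopes\<close>

lemma admissible_const: "admissible M F Tm (\<lambda>\<theta> \<omega>. c)"
  unfolding admissible_def by auto

lemma admissible_add:
  assumes "admissible M F Tm A" "admissible M F Tm B"
  shows "admissible M F Tm (\<lambda>\<tau> \<omega>. A \<tau> \<omega> + B \<tau> \<omega>)"
  unfolding admissible_def
proof (intro conjI ballI)
  fix \<theta> assume "\<theta> \<in> STs M F Tm"
  with assms have [measurable]: "A \<theta> \<in> borel_measurable (Fsig M F \<theta>)" "B \<theta> \<in> borel_measurable (Fsig M F \<theta>)"
    unfolding admissible_def by blast+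
  show "(\<lambda>\<omega>. A \<theta> \<omega> + B \<theta> \<omega>) \<in> borel_measurable (Fsig M F \<theta>)" by measurable
next
  fix \<theta> \<theta>' assume "\<theta> \<in> STs M F Tm" "\<theta>' \<in> STs M F Tm"
  with assms have "AE \<omega> in M. \<theta> \<omega> = \<theta>' \<omega> \<longrightarrow> A \<theta> \<omega> = A \<theta>' \<omega>" "AE \<omega> in M. \<theta> \<omega> = \<theta>' \<omega> \<longrightarrow> B \<theta> \<omega> = B \<theta>' \<omega>"
    unfolding admissible_def by blast+
  then show "AE \<omega> in M. \<theta> \<omega> = \<theta>' \<omega> \<longrightarrow> A \<theta> \<omega> + B \<theta> \<omega> = A \<theta>' \<omega> + B \<theta>' \<omega>"
    by eventually_elim auto
qed

lemma admissible_uminus: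
  assumes "admissible M F Tm A"
  shows "admissible M F Tm (\<lambda>\<tau> \<omega>. - A \<tau> \<omega>)"
  unfolding admissible_def
proof (intro conjI ballI)
  fix \<theta> assume "\<theta> \<in> STs M F Tm"
  with assms have [measurable]: "A \<theta> \<in> borel_measurable (Fsig M F \<theta>)"
    unfolding admissible_def by blast
  show "(\<lambda>\<omega>. - A \<theta> \<omega>) \<in> borel_measurable (Fsig M F \<theta>)" by measurable
next
  fix \<theta> \<theta>' assume "\<theta> \<in> STs M F Tm" "\<theta>' \<in> STs M F Tm"
  with assms have "AE \<omega> in M. \<theta> \<omega> = \<theta>' \<omega> \<longrightarrow> A \<theta> \<omega> = A \<theta>' \<omega>"
    unfolding admissible_def by blast
  then show "AE \<omega> in M. \<theta> \<omega> = \<theta>' \<omega> \<longrightarrow> - A \<theta> \<omega> = - A \<theta>' \<omega>"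
    by eventually_elim auto
qed

lemma admissible_diff:
  "admissible M F Tm A \<Longrightarrow> admissible M F Tm B \<Longrightarrow> admissible M F Tm (\<lambda>\<tau> \<omega>. A \<tau> \<omega> - B \<tau> \<omega>)"
  using admissible_add[of M F Tm A "\<lambda>\<tau> \<omega>. - B \<tau> \<omega>"] admissible_uminus[of M F Tm B]
  by (simp add: minus_ereal_def)

lemma admissible_limsup:
  assumes "\<And>n. admissible M F Tm (Y n)"
  shows "admissible M F Tm (\<lambda>\<theta> \<omega>. limsup (\<lambda>n. Y n \<theta> \<omega>))"
  unfolding admissible_def
proof (intro conjI ballI)
  fix \<theta> assume "\<theta> \<in> STs M F Tm"
  with assms have [measurable]: "Y n \<theta> \<in> borel_measurable (Fsig M F \<theta>)" for n
    unfolding admissible_def by blast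
  show "(\<lambda>\<omega>. limsup (\<lambda>n. Y n \<theta> \<omega>)) \<in> borel_measurable (Fsig M F \<theta>)" by measurable
next
  fix \<theta> \<theta>' assume "\<theta> \<in> STs M F Tm" "\<theta>' \<in> STs M F Tm"
  with assms have "AE \<omega> in M. \<forall>n. \<theta> \<omega> = \<theta>' \<omega> \<longrightarrow> Y n \<theta> \<omega> = Y n \<theta>' \<omega>"
    unfolding AE_all_countable admissible_def by blast
  then show "AE \<omega> in M. \<theta> \<omega> = \<theta>' \<omega> \<longrightarrow> limsup (\<lambda>n. Y n \<theta> \<omega>) = limsup (\<lambda>n. Y n \<theta>' \<omega>)"
    by eventually_elim simp
qed

definition snell_family :: "'a measure \<Rightarrow> (real \<Rightarrow> 'a measure) \<Rightarrow> real \<Rightarrow> 'a family \<Rightarrow> 'a family" where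
  "snell_family M F Tm X = (\<lambda>\<theta>. esssup_fam M (Fsig M F \<theta>)
      {ereal_cond_exp M (Fsig M F \<theta>) (X \<tau>) | \<tau>. \<tau> \<in> STs_from M F Tm \<theta>})"

context std_filtered_space
begin

interpretation prob_space M by (rule prob_space_M)

lemma admissible_measurable: "admissible M F Tm X \<Longrightarrow> \<tau> \<in> STs M F Tm \<Longrightarrow> X \<tau> \<in> borel_measurable (Fsig M F \<tau>)"
  unfolding admissible_def by blast

lemma admissible_measurable_M: "admissible M F Tm X \<Longrightarrow> \<tau> \<in> STs M F Tm \<Longrightarrow> X \<tau> \<in> borel_measurable M"
  using admissible_measurable measurable_Fsig_M by blast

lemma admissible_eq_on_eq:
  "admissible M F Tm X \<Longrightarrow> \<tau> \<in> STs M F Tm \<Longrightarrow> \<tau>' \<in> STs M F Tm \<Longrightarrow>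
   AE \<omega> in M. \<tau> \<omega> = \<tau>' \<omega> \<longrightarrow> X \<tau> \<omega> = X \<tau>' \<omega>"
  unfolding admissible_def by blast

lemma snell_family_measurable:
  "\<theta> \<in> STs M F Tm \<Longrightarrow> snell_family M F Tm X \<theta> \<in> borel_measurable (Fsig M F \<theta>)"
  unfolding snell_family_def
  by (rule esssup_subalgebra.esssup_fam_measurable[OF esssup_subalgebra_Fsig])
     (auto intro: sigma_finite_subalgebra.ereal_cond_exp_measurable[OF sigma_finite_subalgebra_Fsig])

lemma snell_family_upper:
  "\<theta> \<in> STs M F Tm \<Longrightarrow> \<tau> \<in> STs_from M F Tm \<theta> \<Longrightarrow>
    AE \<omega> in M. ereal_cond_exp M (Fsig M F \<theta>) (X \<tau>) \<omega> \<le> snell_family M F Tm X \<theta> \<omega>"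
  unfolding snell_family_def
  by (rule esssup_subalgebra.esssup_fam_upper[OF esssup_subalgebra_Fsig])
     (auto intro: sigma_finite_subalgebra.ereal_cond_exp_measurable[OF sigma_finite_subalgebra_Fsig])

lemma snell_family_least:
  "\<theta> \<in> STs M F Tm \<Longrightarrow> Z \<in> borel_measurable (Fsig M F \<theta>) \<Longrightarrow>
    (\<And>\<tau>. \<tau> \<in> STs_from M F Tm \<theta> \<Longrightarrow> AE \<omega> in M. ereal_cond_exp M (Fsig M F \<theta>) (X \<tau>) \<omega> \<le> Z \<omega>) \<Longrightarrow>
    AE \<omega> in M. snell_family M F Tm X \<theta> \<omega> \<le> Z \<omega>"
  unfolding snell_family_def
  by (rule esssup_subalgebra.esssup_fam_least[OF esssup_subalgebra_Fsig])
     (auto intro: sigma_finite_subalgebra.ereal_cond_exp_measurable[OF sigma_finite_subalgebra_Fsig])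

lemma snell_family_mono:
  assumes \<theta>: "\<theta> \<in> STs M F Tm"
    and X: "\<And>\<tau>. \<tau> \<in> STs M F Tm \<Longrightarrow> X \<tau> \<in> borel_measurable M"
    and Y: "\<And>\<tau>. \<tau> \<in> STs M F Tm \<Longrightarrow> Y \<tau> \<in> borel_measurable M"
    and le: "\<And>\<tau>. \<tau> \<in> STs M F Tm \<Longrightarrow> AE \<omega> in M. X \<tau> \<omega> \<le> Y \<tau> \<omega>"
  shows "AE \<omega> in M. snell_family M F Tm X \<theta> \<omega> \<le> snell_family M F Tm Y \<theta> \<omega>"
proof (rule snell_family_least[OF \<theta> snell_family_measurable[OF \<theta>]])
  fix \<tau> assume \<tau>: "\<tau> \<in> STs_from M F Tm \<theta>"
  then have "\<tau> \<in> STs M F Tm" by (simp add: STs_fromD)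
  then have "AE \<omega> in M. ereal_cond_exp M (Fsig M F \<theta>) (X \<tau>) \<omega> \<le> ereal_cond_exp M (Fsig M F \<theta>) (Y \<tau>) \<omega>"
    by (intro sigma_finite_subalgebra.ereal_cond_exp_mono[OF sigma_finite_subalgebra_Fsig[OF \<theta>]] X Y le)
  with snell_family_upper[OF \<theta> \<tau>, of Y]
  show "AE \<omega> in M. ereal_cond_exp M (Fsig M F \<theta>) (X \<tau>) \<omega> \<le> snell_family M F Tm Y \<theta> \<omega>"
    by eventually_elim (rule order_trans)
qed

definition supermart_ineq :: "'a family \<Rightarrow> bool" where
  "supermart_ineq \<phi> \<longleftrightarrow> (\<forall>\<theta>\<in>STs M F Tm. \<forall>\<theta>'\<in>STs M F Tm. (AE \<omega> in M. \<theta>' \<omega> \<le> \<theta> \<omega>) \<longrightarrow>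
        (AE \<omega> in M. ereal_cond_exp M (Fsig M F \<theta>') (\<phi> \<theta>) \<omega> \<le> \<phi> \<theta>' \<omega>))"

definition nonneg_supermart :: "'a family \<Rightarrow> bool" where
  "nonneg_supermart \<phi> \<longleftrightarrow> admissible M F Tm \<phi> \<and> (\<forall>\<theta>\<in>STs M F Tm. AE \<omega> in M. 0 \<le> \<phi> \<theta> \<omega>)
     \<and> supermart_ineq \<phi>"

lemma neg_part_integrable_nonneg:
  assumes adm: "admissible M F Tm \<phi>" and nonneg: "\<And>\<theta>. \<theta> \<in> STs M F Tm \<Longrightarrow> AE \<omega> in M. 0 \<le> \<phi> \<theta> \<omega>"
  shows "neg_part_integrable M F Tm \<phi>"
proof -
  let ?S = "{(\<lambda>x. max 0 (- \<phi> \<theta> x)) | \<theta>. \<theta> \<in> STs M F Tm}"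
  have "AE \<omega> in M. esssup_fam M M ?S \<omega> \<le> 0"
  proof (rule esssup_subalgebra.esssup_fam_least[OF esssup_subalgebra_M])
    fix Y assume "Y \<in> ?S"
    then obtain \<theta> where \<theta>: "\<theta> \<in> STs M F Tm" and Y: "Y = (\<lambda>x. max 0 (- \<phi> \<theta> x))" by blast
    show "AE \<omega> in M. Y \<omega> \<le> 0" using nonneg[OF \<theta>] by eventually_elim (auto simp: Y)
  qed (use admissible_measurable_M[OF adm] in auto)
  then have "(\<integral>\<^sup>+ \<omega>. e2ennreal (esssup_fam M M ?S \<omega>) \<partial>M) = (\<integral>\<^sup>+ \<omega>. 0 \<partial>M)"
    by (intro nn_integral_cong_AE) (auto elim!: eventually_mono intro: e2ennreal_neg)
  then show ?thesis unfolding neg_part_integrable_def by simp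
qed

lemma supermart_family_nonneg_supermart:
  "nonneg_supermart \<phi> \<Longrightarrow> supermart_family M F Tm \<phi>"
  using neg_part_integrable_nonneg
  unfolding supermart_family_def nonneg_supermart_def supermart_ineq_def by blast

lemma supermart_familyD:
  assumes "supermart_family M F Tm \<phi>" "\<theta> \<in> STs M F Tm" "\<theta>' \<in> STs M F Tm" "AE \<omega> in M. \<theta>' \<omega> \<le> \<theta> \<omega>"
  shows "AE \<omega> in M. ereal_cond_exp M (Fsig M F \<theta>') (\<phi> \<theta>) \<omega> \<le> \<phi> \<theta>' \<omega>"
  using assms unfolding supermart_family_def by blast

lemma nonneg_supermartD:
  assumes "nonneg_supermart \<phi>" "\<theta> \<in> STs M F Tm" "\<theta>' \<in> STs M F Tm" "AE \<omega> in M. \<theta>' \<omega> \<le> \<theta> \<omega>"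
  shows "AE \<omega> in M. ereal_cond_exp M (Fsig M F \<theta>') (\<phi> \<theta>) \<omega> \<le> \<phi> \<theta>' \<omega>"
  using assms unfolding nonneg_supermart_def supermart_ineq_def by blast

lemma nonneg_supermart_zero: "nonneg_supermart (\<lambda>\<theta> \<omega>. 0)"
proof -
  have "AE \<omega> in M. ereal_cond_exp M (Fsig M F \<theta>) (\<lambda>\<omega>. 0) \<omega> \<le> 0" if "\<theta> \<in> STs M F Tm" for \<theta>
    using sigma_finite_subalgebra.ereal_cond_exp_zero[OF sigma_finite_subalgebra_Fsig[OF that]]
    by (rule eventually_mono) simp
  then show ?thesis unfolding nonneg_supermart_def supermart_ineq_def by (simp add: admissible_const)
qed

lemma snell_family_le_supermart:
  assumes H: "supermart_family M F Tm H" and \<theta>: "\<theta> \<in> STs M F Tm"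
    and X: "\<And>\<tau>. \<tau> \<in> STs M F Tm \<Longrightarrow> X \<tau> \<in> borel_measurable M"
    and le: "\<And>\<tau>. \<tau> \<in> STs M F Tm \<Longrightarrow> AE \<omega> in M. X \<tau> \<omega> \<le> H \<tau> \<omega>"
  shows "AE \<omega> in M. snell_family M F Tm X \<theta> \<omega> \<le> H \<theta> \<omega>"
proof -
  have adm: "admissible M F Tm H" using H unfolding supermart_family_def by blast
  show ?thesis
  proof (rule snell_family_least[OF \<theta> admissible_measurable[OF adm \<theta>]])
    fix \<tau> assume "\<tau> \<in> STs_from M F Tm \<theta>"
    then have \<tau>: "\<tau> \<in> STs M F Tm" and \<theta>_le: "AE \<omega> in M. \<theta> \<omega> \<le> \<tau> \<omega>" using STs_fromD by auto
    have "AE \<omega> in M. ereal_cond_exp M (Fsig M F \<theta>) (X \<tau>) \<omega> \<le> ereal_cond_exp M (Fsig M F \<theta>) (H \<tau>) \<omega>"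
      by (rule sigma_finite_subalgebra.ereal_cond_exp_mono[OF sigma_finite_subalgebra_Fsig[OF \<theta>]
            X[OF \<tau>] admissible_measurable_M[OF adm \<tau>] le[OF \<tau>]])
    with supermart_familyD[OF H \<tau> \<theta> \<theta>_le]
    show "AE \<omega> in M. ereal_cond_exp M (Fsig M F \<theta>) (X \<tau>) \<omega> \<le> H \<theta> \<omega>"
      by eventually_elim (rule order_trans)
  qed
qed

lemma nonneg_supermart_incseq_limit:
  fixes Y :: "nat \<Rightarrow> 'a family"
  assumes Y: "\<And>n. nonneg_supermart (Y n)"
    and inc: "\<And>n \<theta>. \<theta> \<in> STs M F Tm \<Longrightarrow> AE \<omega> in M. Y n \<theta> \<omega> \<le> Y (Suc n) \<theta> \<omega>"
  shows "nonneg_supermart (\<lambda>\<theta> \<omega>. limsup (\<lambda>n. Y n \<theta> \<omega>))"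
    and "\<And>\<theta>. \<theta> \<in> STs M F Tm \<Longrightarrow> AE \<omega> in M. limsup (\<lambda>n. Y n \<theta> \<omega>) = (SUP n. Y n \<theta> \<omega>)"
proof -
  define L where "L = (\<lambda>\<theta> \<omega>. limsup (\<lambda>n. Y n \<theta> \<omega>))"
  have adm: "admissible M F Tm (Y n)" and nonneg: "\<And>\<theta>. \<theta> \<in> STs M F Tm \<Longrightarrow> AE \<omega> in M. 0 \<le> Y n \<theta> \<omega>"
    and ineq: "supermart_ineq (Y n)" for n
    using Y unfolding nonneg_supermart_def by blast+
  have incseq: "AE \<omega> in M. incseq (\<lambda>n. Y n \<theta> \<omega>)" if "\<theta> \<in> STs M F Tm" for \<theta>
  proof -
    have "AE \<omega> in M. \<forall>n. Y n \<theta> \<omega> \<le> Y (Suc n) \<theta> \<omega>" unfolding AE_all_countable using inc[OF that] by blast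
    then show ?thesis by eventually_elim (simp add: incseq_Suc_iff)
  qed
  show L_SUP: "AE \<omega> in M. limsup (\<lambda>n. Y n \<theta> \<omega>) = (SUP n. Y n \<theta> \<omega>)" if "\<theta> \<in> STs M F Tm" for \<theta>
    using incseq[OF that] by eventually_elim (intro lim_imp_Limsup LIMSEQ_SUP, simp_all)
  have adm_L: "admissible M F Tm L" unfolding L_def by (rule admissible_limsup[OF adm])
  moreover have "AE \<omega> in M. 0 \<le> L \<theta> \<omega>" if "\<theta> \<in> STs M F Tm" for \<theta>
    using L_SUP[OF that] nonneg[OF that, of 0] unfolding L_def
    by eventually_elim (auto intro: SUP_upper2)
  moreover have "supermart_ineq L"
    unfolding supermart_ineq_def
  proof (intro ballI impI)
    fix \<theta> \<theta>' assume \<theta>: "\<theta> \<in> STs M F Tm" and \<theta>': "\<theta>' \<in> STs M F Tm" and le: "AE \<omega> in M. \<theta>' \<omega> \<le> \<theta> \<omega>"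
    interpret S': sigma_finite_subalgebra M "Fsig M F \<theta>'" by (rule sigma_finite_subalgebra_Fsig[OF \<theta>'])
    have [measurable]: "Y n \<theta> \<in> borel_measurable M" for n using admissible_measurable_M[OF adm \<theta>] .
    have [measurable]: "L \<theta> \<in> borel_measurable M" using admissible_measurable_M[OF adm_L \<theta>] .
    have "AE \<omega> in M. ereal_cond_exp M (Fsig M F \<theta>') (L \<theta>) \<omega>
        = ereal_cond_exp M (Fsig M F \<theta>') (\<lambda>\<omega>. SUP n. Y n \<theta> \<omega>) \<omega>"
      using L_SUP[OF \<theta>] unfolding L_def by (intro S'.ereal_cond_exp_cong) auto
    moreover have "AE \<omega> in M. ereal_cond_exp M (Fsig M F \<theta>') (\<lambda>\<omega>. SUP n. Y n \<theta> \<omega>) \<omega>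
        = (SUP n. ereal_cond_exp M (Fsig M F \<theta>') (Y n \<theta>) \<omega>)"
      using nonneg[OF \<theta>]
      by (intro S'.ereal_cond_exp_monotone_convergence[where G="\<lambda>_. 0", OF _ _ _ _ incseq[OF \<theta>]]) auto
    moreover have "AE \<omega> in M. \<forall>n. ereal_cond_exp M (Fsig M F \<theta>') (Y n \<theta>) \<omega> \<le> Y n \<theta>' \<omega>"
      unfolding AE_all_countable using ineq \<theta> \<theta>' le unfolding supermart_ineq_def by blast
    moreover note L_SUP[OF \<theta>']
    ultimately show "AE \<omega> in M. ereal_cond_exp M (Fsig M F \<theta>') (L \<theta>) \<omega> \<le> L \<theta>' \<omega>"
      unfolding L_def by eventually_elim (auto intro: SUP_mono)
  qed
  ultimately show "nonneg_supermart (\<lambda>\<theta> \<omega>. limsup (\<lambda>n. Y n \<theta> \<omega>))"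
    unfolding nonneg_supermart_def L_def by blast
qed

text \<open>Finiteness propagates from time \<open>0\<close> through \<open>E[\<phi> \<theta>|\<F>\<^sub>0] \<le> \<phi> 0\<close>.\<close>

lemma nonneg_supermart_less_top:
  assumes \<phi>: "nonneg_supermart \<phi>" and fin: "AE \<omega> in M. \<phi> (\<lambda>_. 0) \<omega> < \<infinity>" and \<theta>: "\<theta> \<in> STs M F Tm"
  shows "AE \<omega> in M. \<phi> \<theta> \<omega> < \<infinity>"
proof -
  interpret S: sigma_finite_subalgebra M "Fsig M F (\<lambda>_. 0)" by (rule sigma_finite_subalgebra_Fsig[OF zero_in_STs])
  have nonneg: "AE \<omega> in M. 0 \<le> \<phi> \<theta> \<omega>" and [measurable]: "\<phi> \<theta> \<in> borel_measurable M"
    using \<phi> \<theta> admissible_measurable_M unfolding nonneg_supermart_def by blast+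
  have "AE \<omega> in M. 0 \<le> \<theta> \<omega>" using STs_bounds[OF \<theta>] by (auto intro: AE_I2)
  then have "AE \<omega> in M. ereal_cond_exp M (Fsig M F (\<lambda>_. 0)) (\<phi> \<theta>) \<omega> \<le> \<phi> (\<lambda>_. 0) \<omega>"
    by (rule nonneg_supermartD[OF \<phi> \<theta> zero_in_STs])
  moreover have "AE \<omega> in M. ereal_cond_exp M (Fsig M F (\<lambda>_. 0)) (\<phi> \<theta>) \<omega>
      = enn2ereal (nn_cond_exp M (Fsig M F (\<lambda>_. 0)) (\<lambda>x. e2ennreal (\<phi> \<theta> x)) \<omega>)"
    by (rule S.ereal_cond_exp_nonneg[OF _ nonneg]) measurable
  ultimately have "AE \<omega> in M. nn_cond_exp M (Fsig M F (\<lambda>_. 0)) (\<lambda>x. e2ennreal (\<phi> \<theta> x)) \<omega> < top"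
    using fin by eventually_elim (auto simp: less_top[symmetric])
  then have "AE \<omega> in M. e2ennreal (\<phi> \<theta> \<omega>) < top"
    by (rule S.nn_cond_exp_less_top_imp_less_top[OF finite_measure_axioms, rotated]) measurable
  then show ?thesis by eventually_elim (auto simp: less_top)
qed

end

locale snell_envelope = std_filtered_space +
  fixes X :: "'a family" and G :: "'a \<Rightarrow> ennreal"
  assumes admissible_X: "admissible M F Tm X"
    and G_measurable[measurable]: "G \<in> borel_measurable M"
    and G_integrable: "(\<integral>\<^sup>+\<omega>. G \<omega> \<partial>M) < top"
    and X_lower: "\<And>\<tau>. \<tau> \<in> STs M F Tm \<Longrightarrow> AE \<omega> in M. - enn2ereal (G \<omega>) \<le> X \<tau> \<omega>"
    and X_Tm_nonneg: "AE \<omega> in M. 0 \<le> X (\<lambda>_. Tm) \<omega>"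
begin

abbreviation "V \<equiv> snell_family M F Tm X"
abbreviation "ce \<theta> \<equiv> ereal_cond_exp M (Fsig M F \<theta>)"

lemma X_measurable: "\<tau> \<in> STs M F Tm \<Longrightarrow> X \<tau> \<in> borel_measurable M"
  using admissible_measurable_M[OF admissible_X] .

lemma snell_ge_obstacle:
  assumes \<theta>: "\<theta> \<in> STs M F Tm" shows "AE \<omega> in M. X \<theta> \<omega> \<le> V \<theta> \<omega>"
proof -
  have "AE \<omega> in M. ce \<theta> (X \<theta>) \<omega> = X \<theta> \<omega>"
    by (rule sigma_finite_subalgebra.ereal_cond_exp_F_meas[OF sigma_finite_subalgebra_Fsig[OF \<theta>]
          admissible_measurable[OF admissible_X \<theta>]])
  with snell_family_upper[OF \<theta> self_in_STs_from[OF \<theta>], of X] show ?thesis by eventually_elim simp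
qed

lemma snell_nonneg:
  assumes \<theta>: "\<theta> \<in> STs M F Tm" shows "AE \<omega> in M. 0 \<le> V \<theta> \<omega>"
proof -
  interpret S: sigma_finite_subalgebra M "Fsig M F \<theta>" by (rule sigma_finite_subalgebra_Fsig[OF \<theta>])
  have "AE \<omega> in M. ce \<theta> (\<lambda>_. 0) \<omega> \<le> ce \<theta> (X (\<lambda>_. Tm)) \<omega>"
    by (rule S.ereal_cond_exp_mono) (use X_Tm_nonneg X_measurable[OF Tm_in_STs] in auto)
  with S.ereal_cond_exp_zero snell_family_upper[OF \<theta> Tm_in_STs_from[OF \<theta>], of X] show ?thesis
    by eventually_elim simp
qed

text \<open>Pasting two stopping times along the \<open>\<F>\<^sub>\<theta>\<close>-set where the first one is better makes the
  family of conditional payoffs upward directed.\<close>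

lemma snell_directed:
  assumes \<theta>: "\<theta> \<in> STs M F Tm" and \<tau>1: "\<tau>1 \<in> STs_from M F Tm \<theta>" and \<tau>2: "\<tau>2 \<in> STs_from M F Tm \<theta>"
  shows "\<exists>\<tau>\<in>STs_from M F Tm \<theta>. AE \<omega> in M. max (ce \<theta> (X \<tau>1) \<omega>) (ce \<theta> (X \<tau>2) \<omega>) \<le> ce \<theta> (X \<tau>) \<omega>"
proof -
  interpret S: sigma_finite_subalgebra M "Fsig M F \<theta>" by (rule sigma_finite_subalgebra_Fsig[OF \<theta>])
  have \<tau>1': "\<tau>1 \<in> STs M F Tm" and \<tau>2': "\<tau>2 \<in> STs M F Tm" using STs_fromD \<tau>1 \<tau>2 by auto
  define A where "A = {\<omega>\<in>space M. ce \<theta> (X \<tau>2) \<omega> \<le> ce \<theta> (X \<tau>1) \<omega>}"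
  have "{\<omega>\<in>space (Fsig M F \<theta>). ce \<theta> (X \<tau>2) \<omega> \<le> ce \<theta> (X \<tau>1) \<omega>} \<in> sets (Fsig M F \<theta>)" by measurable
  then have A: "A \<in> sets (Fsig M F \<theta>)" unfolding A_def by simp
  have A_compl: "space M - A \<in> sets (Fsig M F \<theta>)" using sets.compl_sets[OF A] by simp
  define \<tau> where "\<tau> = (\<lambda>\<omega>. if \<omega> \<in> A then \<tau>1 \<omega> else \<tau>2 \<omega>)"
  have \<tau>_from: "\<tau> \<in> STs_from M F Tm \<theta>" unfolding \<tau>_def by (rule if_in_STs_from[OF \<theta> A \<tau>1 \<tau>2])
  then have \<tau>': "\<tau> \<in> STs M F Tm" using STs_fromD by blast
  have "AE \<omega> in M. \<omega> \<in> A \<longrightarrow> X \<tau> \<omega> = X \<tau>1 \<omega>"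
    using admissible_eq_on_eq[OF admissible_X \<tau>' \<tau>1'] by eventually_elim (auto simp: \<tau>_def)
  then have "AE \<omega> in M. \<omega> \<in> A \<longrightarrow> ce \<theta> (X \<tau>) \<omega> = ce \<theta> (X \<tau>1) \<omega>"
    by (rule S.ereal_cond_exp_local[OF X_measurable[OF \<tau>'] X_measurable[OF \<tau>1'] A])
  moreover have "AE \<omega> in M. \<omega> \<in> space M - A \<longrightarrow> X \<tau> \<omega> = X \<tau>2 \<omega>"
    using admissible_eq_on_eq[OF admissible_X \<tau>' \<tau>2'] by eventually_elim (auto simp: \<tau>_def)
  then have "AE \<omega> in M. \<omega> \<in> space M - A \<longrightarrow> ce \<theta> (X \<tau>) \<omega> = ce \<theta> (X \<tau>2) \<omega>"
    by (rule S.ereal_cond_exp_local[OF X_measurable[OF \<tau>'] X_measurable[OF \<tau>2'] A_compl])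
  ultimately have "AE \<omega> in M. max (ce \<theta> (X \<tau>1) \<omega>) (ce \<theta> (X \<tau>2) \<omega>) \<le> ce \<theta> (X \<tau>) \<omega>"
    using AE_space by eventually_elim (auto simp: A_def max_def)
  with \<tau>_from show ?thesis by blast
qed

lemma snell_incseq:
  assumes \<theta>: "\<theta> \<in> STs M F Tm"
  obtains \<tau>s :: "nat \<Rightarrow> 'a \<Rightarrow> real"
  where "\<And>k. \<tau>s k \<in> STs_from M F Tm \<theta>" "AE \<omega> in M. incseq (\<lambda>k. ce \<theta> (X (\<tau>s k)) \<omega>)"
    "AE \<omega> in M. V \<theta> \<omega> = (SUP k. ce \<theta> (X (\<tau>s k)) \<omega>)"
proof -
  interpret E: esssup_subalgebra M "Fsig M F \<theta>" by (rule esssup_subalgebra_Fsig[OF \<theta>])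
  let ?S = "{ce \<theta> (X \<tau>) | \<tau>. \<tau> \<in> STs_from M F Tm \<theta>}"
  have "?S \<noteq> {}" using self_in_STs_from[OF \<theta>] by blast
  moreover have "\<exists>W\<in>?S. AE \<omega> in M. max (Y \<omega>) (Z \<omega>) \<le> W \<omega>" if "Y \<in> ?S" "Z \<in> ?S" for Y Z
    using that snell_directed[OF \<theta>] by blast
  ultimately obtain f :: "nat \<Rightarrow> 'a \<Rightarrow> ereal"
    where f: "\<And>k. f k \<in> ?S" "AE \<omega> in M. incseq (\<lambda>k. f k \<omega>)"
      "AE \<omega> in M. esssup_fam M (Fsig M F \<theta>) ?S \<omega> = (SUP k. f k \<omega>)"
    using E.esssup_fam_incseq[of ?S]
      sigma_finite_subalgebra.ereal_cond_exp_measurable[OF sigma_finite_subalgebra_Fsig[OF \<theta>]]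
    by blast
  then have "\<forall>k. \<exists>\<tau>. \<tau> \<in> STs_from M F Tm \<theta> \<and> f k = ce \<theta> (X \<tau>)" by blast
  then obtain \<tau>s where \<tau>s: "\<And>k. \<tau>s k \<in> STs_from M F Tm \<theta>" and f_eq: "\<And>k. f k = ce \<theta> (X (\<tau>s k))"
    by metis
  show ?thesis
  proof (rule that[OF \<tau>s])
    show "AE \<omega> in M. incseq (\<lambda>k. ce \<theta> (X (\<tau>s k)) \<omega>)" using f(2) unfolding f_eq .
    show "AE \<omega> in M. V \<theta> \<omega> = (SUP k. ce \<theta> (X (\<tau>s k)) \<omega>)" using f(3) unfolding f_eq snell_family_def .
  qed
qed

text \<open>Along a maximizing sequence, conditional monotone convergence and
  the tower property give \<open>E[V \<theta>|\<F>\<^sub>\<theta>\<^sub>'] = sup\<^sub>k E[X \<tau>\<^sub>k|\<F>\<^sub>\<theta>\<^sub>'] \<le> V \<theta>'\<close>.\<close>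

lemma snell_supermart_ineq:
  assumes \<theta>: "\<theta> \<in> STs M F Tm" and \<theta>': "\<theta>' \<in> STs M F Tm" and le: "AE \<omega> in M. \<theta>' \<omega> \<le> \<theta> \<omega>"
  shows "AE \<omega> in M. ce \<theta>' (V \<theta>) \<omega> \<le> V \<theta>' \<omega>"
proof -
  interpret S: sigma_finite_subalgebra M "Fsig M F \<theta>" by (rule sigma_finite_subalgebra_Fsig[OF \<theta>])
  interpret S': sigma_finite_subalgebra M "Fsig M F \<theta>'" by (rule sigma_finite_subalgebra_Fsig[OF \<theta>'])
  obtain \<tau>s :: "nat \<Rightarrow> 'a \<Rightarrow> real" where \<tau>s: "\<And>k. \<tau>s k \<in> STs_from M F Tm \<theta>"
    and inc: "AE \<omega> in M. incseq (\<lambda>k. ce \<theta> (X (\<tau>s k)) \<omega>)"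
    and V_SUP: "AE \<omega> in M. V \<theta> \<omega> = (SUP k. ce \<theta> (X (\<tau>s k)) \<omega>)"
    using snell_incseq[OF \<theta>] by blast
  have \<tau>s': "\<tau>s k \<in> STs M F Tm" for k using STs_fromD[OF \<tau>s] by blast
  have \<tau>s_from': "\<tau>s k \<in> STs_from M F Tm \<theta>'" for k
  proof (rule STs_fromI[OF \<tau>s'])
    have "AE \<omega> in M. \<theta> \<omega> \<le> \<tau>s k \<omega>" using STs_fromD[OF \<tau>s[of k]] by blast
    with le show "AE \<omega> in M. \<theta>' \<omega> \<le> \<tau>s k \<omega>" by eventually_elim simp
  qed
  have [measurable]: "X (\<tau>s k) \<in> borel_measurable M" for k using X_measurable[OF \<tau>s'] .
  have [measurable]: "ce \<theta> (X (\<tau>s k)) \<in> borel_measurable M" for k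
    using measurable_from_subalg[OF subalgebra_Fsig[OF \<theta>] S.ereal_cond_exp_measurable] .
  have [measurable]: "V \<theta> \<in> borel_measurable M"
    using measurable_Fsig_M[OF \<theta> snell_family_measurable[OF \<theta>]] .
  have sub: "subalgebra (Fsig M F \<theta>) (Fsig M F \<theta>')"
    unfolding subalgebra_def using sets_Fsig_mono[OF \<theta> \<theta>' le] by simp
  have "AE \<omega> in M. ce \<theta>' (V \<theta>) \<omega> = ce \<theta>' (\<lambda>\<omega>. SUP k. ce \<theta> (X (\<tau>s k)) \<omega>) \<omega>"
    using V_SUP by (intro S'.ereal_cond_exp_cong) auto
  moreover have "AE \<omega> in M. ce \<theta>' (\<lambda>\<omega>. SUP k. ce \<theta> (X (\<tau>s k)) \<omega>) \<omega> = (SUP k. ce \<theta>' (ce \<theta> (X (\<tau>s k))) \<omega>)"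
  proof (rule S'.ereal_cond_exp_monotone_convergence[OF _ _ _ _ inc])
    show "(\<integral>\<^sup>+\<omega>. nn_cond_exp M (Fsig M F \<theta>) G \<omega> \<partial>M) < top"
      using G_integrable S.nn_integral_nn_cond_exp[of G] by simp
    show "AE \<omega> in M. - enn2ereal (nn_cond_exp M (Fsig M F \<theta>) G \<omega>) \<le> ce \<theta> (X (\<tau>s k)) \<omega>" for k
      by (rule S.ereal_cond_exp_lower_bound[OF X_measurable[OF \<tau>s'] G_measurable G_integrable X_lower[OF \<tau>s']])
  qed measurable
  moreover have "AE \<omega> in M. \<forall>k. ce \<theta>' (ce \<theta> (X (\<tau>s k))) \<omega> = ce \<theta>' (X (\<tau>s k)) \<omega>"
    unfolding AE_all_countable
    using S'.ereal_cond_exp_nested_subalg[OF subalgebra_Fsig[OF \<theta>] sub X_measurable[OF \<tau>s'] G_measurable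
          G_integrable X_lower[OF \<tau>s']] by blast
  moreover have "AE \<omega> in M. \<forall>k. ce \<theta>' (X (\<tau>s k)) \<omega> \<le> V \<theta>' \<omega>"
    unfolding AE_all_countable using snell_family_upper[OF \<theta>' \<tau>s_from'] by blast
  ultimately show ?thesis
  proof eventually_elim
    case (elim \<omega>)
    have "(SUP k. ce \<theta>' (ce \<theta> (X (\<tau>s k))) \<omega>) \<le> V \<theta>' \<omega>"
      using elim(3,4) by (intro SUP_least) simp
    with elim(1,2) show ?case by simp
  qed
qed

lemma snell_le_on_eq:
  assumes \<theta>: "\<theta> \<in> STs M F Tm" and \<theta>': "\<theta>' \<in> STs M F Tm"
  shows "AE \<omega> in M. \<theta> \<omega> = \<theta>' \<omega> \<longrightarrow> V \<theta> \<omega> \<le> V \<theta>' \<omega>"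
proof -
  interpret S: sigma_finite_subalgebra M "Fsig M F \<theta>" by (rule sigma_finite_subalgebra_Fsig[OF \<theta>])
  obtain \<tau>s :: "nat \<Rightarrow> 'a \<Rightarrow> real" where \<tau>s: "\<And>k. \<tau>s k \<in> STs_from M F Tm \<theta>"
    and V_SUP: "AE \<omega> in M. V \<theta> \<omega> = (SUP k. ce \<theta> (X (\<tau>s k)) \<omega>)"
    using snell_incseq[OF \<theta>] by blast
  have \<tau>s': "\<tau>s k \<in> STs M F Tm" for k using STs_fromD[OF \<tau>s] by blast
  define A where "A = {\<omega>\<in>space M. \<theta> \<omega> = \<theta>' \<omega>}"
  have A: "A \<in> sets (Fsig M F \<theta>)" unfolding A_def by (rule eq_stopping_times_in_Fsig[OF \<theta> \<theta>'])
  define \<sigma> where "\<sigma> k = (\<lambda>\<omega>. if \<omega> \<in> A then \<tau>s k \<omega> else Tm)" for k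
  have \<sigma>_from: "\<sigma> k \<in> STs_from M F Tm \<theta>'" for k
    unfolding \<sigma>_def A_def by (rule if_eq_else_Tm_in_STs_from[OF \<theta> \<theta>' \<tau>s])
  then have \<sigma>': "\<sigma> k \<in> STs M F Tm" for k using STs_fromD by blast
  have "AE \<omega> in M. \<omega> \<in> A \<longrightarrow> ce \<theta> (X (\<tau>s k)) \<omega> \<le> V \<theta>' \<omega>" for k
  proof -
    have "AE \<omega> in M. \<omega> \<in> A \<longrightarrow> X (\<tau>s k) \<omega> = X (\<sigma> k) \<omega>"
      using admissible_eq_on_eq[OF admissible_X \<tau>s' \<sigma>'] by eventually_elim (auto simp: \<sigma>_def)
    then have "AE \<omega> in M. \<omega> \<in> A \<longrightarrow> ce \<theta> (X (\<tau>s k)) \<omega> = ce \<theta> (X (\<sigma> k)) \<omega>"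
      by (rule S.ereal_cond_exp_local[OF X_measurable[OF \<tau>s'] X_measurable[OF \<sigma>'] A])
    moreover have "AE \<omega> in M. \<theta> \<omega> = \<theta>' \<omega> \<longrightarrow> ce \<theta> (X (\<sigma> k)) \<omega> = ce \<theta>' (X (\<sigma> k)) \<omega>"
      by (rule ereal_cond_exp_Fsig_eq_on_eq[OF \<theta> \<theta>' X_measurable[OF \<sigma>']])
    moreover have "AE \<omega> in M. ce \<theta>' (X (\<sigma> k)) \<omega> \<le> V \<theta>' \<omega>"
      by (rule snell_family_upper[OF \<theta>' \<sigma>_from])
    ultimately show ?thesis by eventually_elim (auto simp: A_def)
  qed
  then have "AE \<omega> in M. \<forall>k. \<omega> \<in> A \<longrightarrow> ce \<theta> (X (\<tau>s k)) \<omega> \<le> V \<theta>' \<omega>"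
    unfolding AE_all_countable by blast
  with V_SUP AE_space show ?thesis
  proof eventually_elim
    case (elim \<omega>)
    show ?case
    proof
      assume "\<theta> \<omega> = \<theta>' \<omega>"
      with elim have "\<forall>k. ce \<theta> (X (\<tau>s k)) \<omega> \<le> V \<theta>' \<omega>" by (simp add: A_def)
      with elim show "V \<theta> \<omega> \<le> V \<theta>' \<omega>" by (simp add: SUP_least)
    qed
  qed
qed

lemma admissible_snell: "admissible M F Tm V"
  unfolding admissible_def
proof (intro conjI ballI)
  fix \<theta> \<theta>' assume "\<theta> \<in> STs M F Tm" "\<theta>' \<in> STs M F Tm"
  with snell_le_on_eq[of \<theta> \<theta>'] snell_le_on_eq[of \<theta>' \<theta>]
  show "AE \<omega> in M. \<theta> \<omega> = \<theta>' \<omega> \<longrightarrow> V \<theta> \<omega> = V \<theta>' \<omega>"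
    by (auto elim: eventually_elim2)
qed (rule snell_family_measurable)

lemma nonneg_supermart_snell: "nonneg_supermart V"
  unfolding nonneg_supermart_def supermart_ineq_def
  by (intro conjI ballI impI admissible_snell snell_nonneg snell_supermart_ineq)

end

section \<open>The Dynkin game sequences and Mokobodski's condition\<close>

lemma ereal_SUP_sandwich:
  fixes j j' :: "nat \<Rightarrow> ereal"
  assumes step: "\<And>n. j' n + x \<le> j (Suc n)" and step': "\<And>n. j n - z \<le> j' (Suc n)"
    and nonneg: "\<And>n. 0 \<le> j' n" and fin: "(SUP n. j n) < \<infinity>" and x: "- \<infinity> < x"
  shows "(SUP n. j' n) < \<infinity> \<and> x \<le> (SUP n. j n) - (SUP n. j' n) \<and> (SUP n. j n) - (SUP n. j' n) \<le> z"
proof -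
  have "(SUP n. j' n) + x = (SUP n. j' n + x)" using x by (intro SUP_ereal_add_left[symmetric]) auto
  also have "\<dots> \<le> (SUP n. j n)" using step by (intro SUP_least) (blast intro: SUP_upper2)
  finally have le: "(SUP n. j' n) + x \<le> (SUP n. j n)" .
  with fin x have fin': "(SUP n. j' n) < \<infinity>" by (cases "SUP n. j' n") auto
  moreover have "0 \<le> (SUP n. j' n)" using nonneg by (intro SUP_upper2) auto
  ultimately have abs_fin: "\<bar>SUP n. j' n\<bar> \<noteq> \<infinity>" by auto
  have lower: "x \<le> (SUP n. j n) - (SUP n. j' n)"
    using le abs_fin by (cases x; cases "SUP n. j n"; cases "SUP n. j' n") auto
  have "j n - (SUP n. j' n) \<le> z" for n
  proof -
    have "j n - z \<le> (SUP n. j' n)" using step'[of n] by (blast intro: SUP_upper2)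
    with abs_fin show ?thesis by (cases "j n"; cases z; cases "SUP n. j' n") auto
  qed
  then have "(SUP n. j n + - (SUP n. j' n)) \<le> z" by (simp add: minus_ereal_def SUP_least)
  moreover have "(SUP n. j n + - (SUP n. j' n)) = (SUP n. j n) + - (SUP n. j' n)"
    using abs_fin by (intro SUP_ereal_add_left) auto
  ultimately have "(SUP n. j n) - (SUP n. j' n) \<le> z" by (simp add: minus_ereal_def)
  with fin' lower show ?thesis by blast
qed

lemma ereal_add_le_of_le_diff:
  fixes a x h h' z :: ereal
  assumes "a \<le> h'" "x \<le> h - h'" "h - h' \<le> z" "z < \<infinity>" "- \<infinity> < x" "0 \<le> h'"
  shows "a + x \<le> h"
  using assms by (cases a; cases x; cases h; cases h'; cases z) auto

lemma ereal_diff_le_of_le_diff: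
  fixes j x h h' z :: ereal
  assumes "j \<le> h" "h - h' \<le> z" "x \<le> h - h'" "- \<infinity> < x" "z < \<infinity>" "0 \<le> h'"
  shows "j - z \<le> h'"
  using assms by (cases j; cases x; cases h; cases h'; cases z) auto

lemma ereal_less_PInfty_of_diff_le:
  fixes h h' z :: ereal
  assumes "h - h' \<le> z" "z < \<infinity>" "h' < \<infinity>" "0 \<le> h'"
  shows "h < \<infinity>"
  using assms by (cases h; cases z; cases h') auto

lemma Jn_0: "Jn M F Tm \<xi> \<zeta> 0 = (\<lambda>\<theta> \<omega>. 0)" and J'n_0: "J'n M F Tm \<xi> \<zeta> 0 = (\<lambda>\<theta> \<omega>. 0)"
  unfolding Jn_def J'n_def by simp_all

lemma Jn_Suc: "Jn M F Tm \<xi> \<zeta> (Suc n) = snell_family M F Tm (\<lambda>\<tau> \<omega>. J'n M F Tm \<xi> \<zeta> n \<tau> \<omega> + \<xi> \<tau> \<omega>)"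
  unfolding Jn_def J'n_def snell_family_def by simp

lemma J'n_Suc: "J'n M F Tm \<xi> \<zeta> (Suc n) = snell_family M F Tm (\<lambda>\<sigma> \<omega>. Jn M F Tm \<xi> \<zeta> n \<sigma> \<omega> - \<zeta> \<sigma> \<omega>)"
  unfolding Jn_def J'n_def snell_family_def by simp

lemma Jpair_swap:
  "Jpair M F Tm (\<lambda>\<theta> \<omega>. - \<zeta> \<theta> \<omega>) (\<lambda>\<theta> \<omega>. - \<xi> \<theta> \<omega>) n
    = (snd (Jpair M F Tm \<xi> \<zeta> n), fst (Jpair M F Tm \<xi> \<zeta> n))"
  by (induction n) (simp_all add: minus_ereal_def)

lemma Jlim_swap: "Jlim M F Tm (\<lambda>\<theta> \<omega>. - \<zeta> \<theta> \<omega>) (\<lambda>\<theta> \<omega>. - \<xi> \<theta> \<omega>) = J'lim M F Tm \<xi> \<zeta>"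
  and J'lim_swap: "J'lim M F Tm (\<lambda>\<theta> \<omega>. - \<zeta> \<theta> \<omega>) (\<lambda>\<theta> \<omega>. - \<xi> \<theta> \<omega>) = Jlim M F Tm \<xi> \<zeta>"
  unfolding Jlim_def J'lim_def Jn_def J'n_def Jpair_swap by simp_all

definition mokobodski_pair :: "'a measure \<Rightarrow> (real \<Rightarrow> 'a measure) \<Rightarrow> real \<Rightarrow> 'a family \<Rightarrow> 'a family
    \<Rightarrow> 'a family \<Rightarrow> 'a family \<Rightarrow> bool" where
  "mokobodski_pair M F Tm \<xi> \<zeta> H H' \<longleftrightarrow>
     supermart_family M F Tm H \<and> supermart_family M F Tm H'
     \<and> (\<forall>\<theta>\<in>STs M F Tm. AE \<omega> in M. 0 \<le> H \<theta> \<omega> \<and> 0 \<le> H' \<theta> \<omega>)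
     \<and> (\<forall>\<theta>\<in>STs M F Tm. AE \<omega> in M. \<xi> \<theta> \<omega> \<le> H \<theta> \<omega> - H' \<theta> \<omega> \<and> H \<theta> \<omega> - H' \<theta> \<omega> \<le> \<zeta> \<theta> \<omega>)"

locale dynkin_game = std_filtered_space +
  fixes \<xi> \<zeta> :: "'a family"
  assumes admissible_xi: "admissible M F Tm \<xi>" and admissible_zeta: "admissible M F Tm \<zeta>"
    and xi_neg: "neg_part_integrable M F Tm \<xi>"
    and zeta_pos: "pos_part_integrable M F Tm \<zeta>"
    and xi_Tm: "AE \<omega> in M. \<xi> (\<lambda>_. Tm) \<omega> = 0"
    and zeta_Tm: "AE \<omega> in M. \<zeta> (\<lambda>_. Tm) \<omega> = 0"
begin

abbreviation "J \<equiv> Jn M F Tm \<xi> \<zeta>"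
abbreviation "J' \<equiv> J'n M F Tm \<xi> \<zeta>"
abbreviation "JL \<equiv> Jlim M F Tm \<xi> \<zeta>"
abbreviation "J'L \<equiv> J'lim M F Tm \<xi> \<zeta>"

definition "Gxi = (\<lambda>\<omega>. e2ennreal (esssup_fam M M {(\<lambda>x. max 0 (- \<xi> \<theta> x)) | \<theta>. \<theta> \<in> STs M F Tm} \<omega>))"
definition "Gzeta = (\<lambda>\<omega>. e2ennreal (esssup_fam M M {(\<lambda>x. max 0 (\<zeta> \<theta> x)) | \<theta>. \<theta> \<in> STs M F Tm} \<omega>))"

lemma Gxi_measurable[measurable]: "Gxi \<in> borel_measurable M"
proof -
  have "esssup_fam M M {(\<lambda>x. max 0 (- \<xi> \<theta> x)) | \<theta>. \<theta> \<in> STs M F Tm} \<in> borel_measurable M"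
    by (rule esssup_subalgebra.esssup_fam_measurable[OF esssup_subalgebra_M])
       (use admissible_measurable_M[OF admissible_xi] in auto)
  then show ?thesis unfolding Gxi_def by measurable
qed

lemma Gzeta_measurable[measurable]: "Gzeta \<in> borel_measurable M"
proof -
  have "esssup_fam M M {(\<lambda>x. max 0 (\<zeta> \<theta> x)) | \<theta>. \<theta> \<in> STs M F Tm} \<in> borel_measurable M"
    by (rule esssup_subalgebra.esssup_fam_measurable[OF esssup_subalgebra_M])
       (use admissible_measurable_M[OF admissible_zeta] in auto)
  then show ?thesis unfolding Gzeta_def by measurable
qed

lemma Gxi_integrable: "(\<integral>\<^sup>+\<omega>. Gxi \<omega> \<partial>M) < top"
  using xi_neg unfolding neg_part_integrable_def Gxi_def by simp

lemma Gzeta_integrable: "(\<integral>\<^sup>+\<omega>. Gzeta \<omega> \<partial>M) < top"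
  using zeta_pos unfolding pos_part_integrable_def Gzeta_def by simp

lemma xi_lower:
  assumes \<theta>: "\<theta> \<in> STs M F Tm" shows "AE \<omega> in M. - enn2ereal (Gxi \<omega>) \<le> \<xi> \<theta> \<omega>"
proof -
  have "AE \<omega> in M. max 0 (- \<xi> \<theta> \<omega>) \<le> esssup_fam M M {(\<lambda>x. max 0 (- \<xi> \<theta> x)) | \<theta>. \<theta> \<in> STs M F Tm} \<omega>"
    by (rule esssup_subalgebra.esssup_fam_upper[OF esssup_subalgebra_M])
       (use admissible_measurable_M[OF admissible_xi] \<theta> in auto)
  then show ?thesis unfolding Gxi_def enn2ereal_e2ennreal_max
    by eventually_elim (auto simp: ereal_uminus_le_reorder)
qed

lemma zeta_upper:
  assumes \<theta>: "\<theta> \<in> STs M F Tm" shows "AE \<omega> in M. - enn2ereal (Gzeta \<omega>) \<le> - \<zeta> \<theta> \<omega>"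
proof -
  have "AE \<omega> in M. max 0 (\<zeta> \<theta> \<omega>) \<le> esssup_fam M M {(\<lambda>x. max 0 (\<zeta> \<theta> x)) | \<theta>. \<theta> \<in> STs M F Tm} \<omega>"
    by (rule esssup_subalgebra.esssup_fam_upper[OF esssup_subalgebra_M])
       (use admissible_measurable_M[OF admissible_zeta] \<theta> in auto)
  then show ?thesis unfolding Gzeta_def enn2ereal_e2ennreal_max by eventually_elim auto
qed

lemma xi_gt_MInfty: "\<theta> \<in> STs M F Tm \<Longrightarrow> AE \<omega> in M. - \<infinity> < \<xi> \<theta> \<omega>"
  using xi_lower nn_integral_PInf_AE[OF Gxi_measurable] Gxi_integrable
  by (fastforce elim: eventually_elim2 simp: less_top dest: abs_enn2ereal_less_top)

lemma zeta_lt_PInfty: "\<theta> \<in> STs M F Tm \<Longrightarrow> AE \<omega> in M. \<zeta> \<theta> \<omega> < \<infinity>"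
  using zeta_upper nn_integral_PInf_AE[OF Gzeta_measurable] Gzeta_integrable
  by (fastforce elim: eventually_elim2 simp: less_top dest: abs_enn2ereal_less_top)

lemma snell_envelope_J'_xi:
  assumes "nonneg_supermart (J' n)"
  shows "snell_envelope M F Tm (\<lambda>\<tau> \<omega>. J' n \<tau> \<omega> + \<xi> \<tau> \<omega>) Gxi"
proof unfold_locales
  have nonneg: "AE \<omega> in M. 0 \<le> J' n \<tau> \<omega>" if "\<tau> \<in> STs M F Tm" for \<tau>
    using assms that unfolding nonneg_supermart_def by blast
  show "admissible M F Tm (\<lambda>\<tau> \<omega>. J' n \<tau> \<omega> + \<xi> \<tau> \<omega>)"
    using assms admissible_add admissible_xi unfolding nonneg_supermart_def by blast
  show "AE \<omega> in M. - enn2ereal (Gxi \<omega>) \<le> J' n \<tau> \<omega> + \<xi> \<tau> \<omega>" if "\<tau> \<in> STs M F Tm" for \<tau>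
    using xi_lower[OF that] nonneg[OF that]
    by eventually_elim (use add_mono[of 0 "J' n \<tau> _" "- enn2ereal (Gxi _)"] in simp)
  show "AE \<omega> in M. 0 \<le> J' n (\<lambda>_. Tm) \<omega> + \<xi> (\<lambda>_. Tm) \<omega>"
    using nonneg[OF Tm_in_STs] xi_Tm by eventually_elim simp
qed (simp_all add: Gxi_integrable)

lemma snell_envelope_J_zeta:
  assumes "nonneg_supermart (J n)"
  shows "snell_envelope M F Tm (\<lambda>\<sigma> \<omega>. J n \<sigma> \<omega> - \<zeta> \<sigma> \<omega>) Gzeta"
proof unfold_locales
  have nonneg: "AE \<omega> in M. 0 \<le> J n \<tau> \<omega>" if "\<tau> \<in> STs M F Tm" for \<tau>
    using assms that unfolding nonneg_supermart_def by blast
  show "admissible M F Tm (\<lambda>\<tau> \<omega>. J n \<tau> \<omega> - \<zeta> \<tau> \<omega>)"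
    using assms admissible_diff admissible_zeta unfolding nonneg_supermart_def by blast
  show "AE \<omega> in M. - enn2ereal (Gzeta \<omega>) \<le> J n \<tau> \<omega> - \<zeta> \<tau> \<omega>" if "\<tau> \<in> STs M F Tm" for \<tau>
    using zeta_upper[OF that] nonneg[OF that]
    by eventually_elim (use add_mono[of 0 "J n \<tau> _" "- enn2ereal (Gzeta _)"] in \<open>simp add: minus_ereal_def\<close>)
  show "AE \<omega> in M. 0 \<le> J n (\<lambda>_. Tm) \<omega> - \<zeta> (\<lambda>_. Tm) \<omega>"
    using nonneg[OF Tm_in_STs] zeta_Tm by eventually_elim simp
qed (simp_all add: Gzeta_integrable)

lemma nonneg_supermart_Jn: "nonneg_supermart (J n) \<and> nonneg_supermart (J' n)"
proof (induction n)
  case 0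
  show ?case unfolding Jn_0 J'n_0 by (simp add: nonneg_supermart_zero)
next
  case (Suc n)
  interpret J_env: snell_envelope M F Tm "\<lambda>\<tau> \<omega>. J' n \<tau> \<omega> + \<xi> \<tau> \<omega>" Gxi
    using Suc by (intro snell_envelope_J'_xi) blast
  interpret J'_env: snell_envelope M F Tm "\<lambda>\<sigma> \<omega>. J n \<sigma> \<omega> - \<zeta> \<sigma> \<omega>" Gzeta
    using Suc by (intro snell_envelope_J_zeta) blast
  show ?case unfolding Jn_Suc J'n_Suc
    using J_env.nonneg_supermart_snell J'_env.nonneg_supermart_snell by blast
qed

lemma J_Suc_ge: "\<theta> \<in> STs M F Tm \<Longrightarrow> AE \<omega> in M. J' n \<theta> \<omega> + \<xi> \<theta> \<omega> \<le> J (Suc n) \<theta> \<omega>"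
  unfolding Jn_Suc
  using snell_envelope.snell_ge_obstacle[OF snell_envelope_J'_xi] nonneg_supermart_Jn by blast

lemma J'_Suc_ge: "\<theta> \<in> STs M F Tm \<Longrightarrow> AE \<omega> in M. J n \<theta> \<omega> - \<zeta> \<theta> \<omega> \<le> J' (Suc n) \<theta> \<omega>"
  unfolding J'n_Suc
  using snell_envelope.snell_ge_obstacle[OF snell_envelope_J_zeta] nonneg_supermart_Jn by blast

lemma Jn_measurable_M: "\<tau> \<in> STs M F Tm \<Longrightarrow> J n \<tau> \<in> borel_measurable M"
  and J'n_measurable_M: "\<tau> \<in> STs M F Tm \<Longrightarrow> J' n \<tau> \<in> borel_measurable M"
  using nonneg_supermart_Jn admissible_measurable_M unfolding nonneg_supermart_def by blast+

lemma Jn_mono: "\<theta> \<in> STs M F Tm \<Longrightarrow>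
    (AE \<omega> in M. J n \<theta> \<omega> \<le> J (Suc n) \<theta> \<omega>) \<and> (AE \<omega> in M. J' n \<theta> \<omega> \<le> J' (Suc n) \<theta> \<omega>)"
proof (induction n arbitrary: \<theta>)
  case 0
  then show ?case using nonneg_supermart_Jn[of "Suc 0"] unfolding Jn_0 J'n_0 nonneg_supermart_def by blast
next
  case (Suc n)
  have "AE \<omega> in M. J (Suc n) \<theta> \<omega> \<le> J (Suc (Suc n)) \<theta> \<omega>"
    unfolding Jn_Suc[of _ _ _ _ _ "Suc n"] Jn_Suc[of _ _ _ _ _ n]
  proof (rule snell_family_mono[OF Suc.prems])
    fix \<tau> assume \<tau>: "\<tau> \<in> STs M F Tm"
    show "AE \<omega> in M. J' n \<tau> \<omega> + \<xi> \<tau> \<omega> \<le> J' (Suc n) \<tau> \<omega> + \<xi> \<tau> \<omega>"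
      using conjunct2[OF Suc.IH[OF \<tau>]] by eventually_elim (rule add_right_mono)
  qed (use admissible_measurable_M[OF admissible_xi] J'n_measurable_M in simp_all)
  moreover have "AE \<omega> in M. J' (Suc n) \<theta> \<omega> \<le> J' (Suc (Suc n)) \<theta> \<omega>"
    unfolding J'n_Suc[of _ _ _ _ _ "Suc n"] J'n_Suc[of _ _ _ _ _ n]
  proof (rule snell_family_mono[OF Suc.prems])
    fix \<tau> assume \<tau>: "\<tau> \<in> STs M F Tm"
    show "AE \<omega> in M. J n \<tau> \<omega> - \<zeta> \<tau> \<omega> \<le> J (Suc n) \<tau> \<omega> - \<zeta> \<tau> \<omega>"
      using conjunct1[OF Suc.IH[OF \<tau>]] by eventually_elim (rule ereal_minus_mono, auto)
  qed (use admissible_measurable_M[OF admissible_zeta] Jn_measurable_M in simp_all)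
  ultimately show ?case by blast
qed

lemma nonneg_supermart_Jlim: "nonneg_supermart JL"
  and Jlim_eq_SUP: "\<theta> \<in> STs M F Tm \<Longrightarrow> AE \<omega> in M. JL \<theta> \<omega> = (SUP n. J n \<theta> \<omega>)"
  and nonneg_supermart_J'lim: "nonneg_supermart J'L"
  and J'lim_eq_SUP: "\<theta> \<in> STs M F Tm \<Longrightarrow> AE \<omega> in M. J'L \<theta> \<omega> = (SUP n. J' n \<theta> \<omega>)"
  unfolding Jlim_def J'lim_def
  using nonneg_supermart_incseq_limit[of J] nonneg_supermart_incseq_limit[of J']
    nonneg_supermart_Jn Jn_mono by blast+

lemma Jlim_sandwich:
  assumes fin: "AE \<omega> in M. JL (\<lambda>_. 0) \<omega> < \<infinity>" and \<theta>: "\<theta> \<in> STs M F Tm"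
  shows "AE \<omega> in M. J'L \<theta> \<omega> < \<infinity> \<and> \<xi> \<theta> \<omega> \<le> JL \<theta> \<omega> - J'L \<theta> \<omega> \<and> JL \<theta> \<omega> - J'L \<theta> \<omega> \<le> \<zeta> \<theta> \<omega>"
proof -
  have "AE \<omega> in M. \<forall>n. J' n \<theta> \<omega> + \<xi> \<theta> \<omega> \<le> J (Suc n) \<theta> \<omega>"
    unfolding AE_all_countable using J_Suc_ge[OF \<theta>] by blast
  moreover have "AE \<omega> in M. \<forall>n. J n \<theta> \<omega> - \<zeta> \<theta> \<omega> \<le> J' (Suc n) \<theta> \<omega>"
    unfolding AE_all_countable using J'_Suc_ge[OF \<theta>] by blast
  moreover have "AE \<omega> in M. \<forall>n. 0 \<le> J' n \<theta> \<omega>"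
    unfolding AE_all_countable using nonneg_supermart_Jn \<theta> unfolding nonneg_supermart_def by blast
  moreover have "AE \<omega> in M. JL \<theta> \<omega> < \<infinity>"
    by (rule nonneg_supermart_less_top[OF nonneg_supermart_Jlim fin \<theta>])
  ultimately show ?thesis using Jlim_eq_SUP[OF \<theta>] J'lim_eq_SUP[OF \<theta>] xi_gt_MInfty[OF \<theta>]
  proof eventually_elim
    case (elim \<omega>)
    have "(SUP n. J' n \<theta> \<omega>) < \<infinity> \<and> \<xi> \<theta> \<omega> \<le> (SUP n. J n \<theta> \<omega>) - (SUP n. J' n \<theta> \<omega>)
        \<and> (SUP n. J n \<theta> \<omega>) - (SUP n. J' n \<theta> \<omega>) \<le> \<zeta> \<theta> \<omega>"
      using elim by (intro ereal_SUP_sandwich) auto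
    with elim(5,6) show ?case by simp
  qed
qed

lemma mokobodski_pair_Jlim:
  assumes "AE \<omega> in M. JL (\<lambda>_. 0) \<omega> < \<infinity>"
  shows "mokobodski_pair M F Tm \<xi> \<zeta> JL J'L"
  unfolding mokobodski_pair_def
proof (intro conjI ballI supermart_family_nonneg_supermart nonneg_supermart_Jlim nonneg_supermart_J'lim)
  fix \<theta> assume "\<theta> \<in> STs M F Tm"
  then show "AE \<omega> in M. 0 \<le> JL \<theta> \<omega> \<and> 0 \<le> J'L \<theta> \<omega>"
    using nonneg_supermart_Jlim nonneg_supermart_J'lim unfolding nonneg_supermart_def
    by (auto elim: eventually_elim2)
  show "AE \<omega> in M. \<xi> \<theta> \<omega> \<le> JL \<theta> \<omega> - J'L \<theta> \<omega> \<and> JL \<theta> \<omega> - J'L \<theta> \<omega> \<le> \<zeta> \<theta> \<omega>"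
    using Jlim_sandwich[OF assms \<open>\<theta> \<in> STs M F Tm\<close>] by (auto elim: eventually_mono)
qed

lemma Jlim_less_top_imp_J'lim_less_top:
  assumes "AE \<omega> in M. JL (\<lambda>_. 0) \<omega> < \<infinity>"
  shows "AE \<omega> in M. J'L (\<lambda>_. 0) \<omega> < \<infinity>"
  using Jlim_sandwich[OF assms zero_in_STs] by (auto elim: eventually_mono)

lemma Jn_le_mokobodski_pair:
  assumes H: "mokobodski_pair M F Tm \<xi> \<zeta> H H'" and \<theta>: "\<theta> \<in> STs M F Tm"
  shows "(AE \<omega> in M. J n \<theta> \<omega> \<le> H \<theta> \<omega>) \<and> (AE \<omega> in M. J' n \<theta> \<omega> \<le> H' \<theta> \<omega>)"
  using \<theta>
proof (induction n arbitrary: \<theta>)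
  case 0
  with H show ?case unfolding Jn_0 J'n_0 mokobodski_pair_def by (auto elim: eventually_mono)
next
  case (Suc n)
  have sH: "supermart_family M F Tm H" "supermart_family M F Tm H'"
    and nonneg: "\<And>\<tau>. \<tau> \<in> STs M F Tm \<Longrightarrow> AE \<omega> in M. 0 \<le> H \<tau> \<omega> \<and> 0 \<le> H' \<tau> \<omega>"
    and sandwich: "\<And>\<tau>. \<tau> \<in> STs M F Tm \<Longrightarrow>
      AE \<omega> in M. \<xi> \<tau> \<omega> \<le> H \<tau> \<omega> - H' \<tau> \<omega> \<and> H \<tau> \<omega> - H' \<tau> \<omega> \<le> \<zeta> \<tau> \<omega>"
    using H unfolding mokobodski_pair_def by blast+
  have "AE \<omega> in M. J (Suc n) \<theta> \<omega> \<le> H \<theta> \<omega>"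
    unfolding Jn_Suc
  proof (rule snell_family_le_supermart[OF sH(1) Suc.prems])
    fix \<tau> assume \<tau>: "\<tau> \<in> STs M F Tm"
    show "AE \<omega> in M. J' n \<tau> \<omega> + \<xi> \<tau> \<omega> \<le> H \<tau> \<omega>"
      using conjunct2[OF Suc.IH[OF \<tau>]] sandwich[OF \<tau>] nonneg[OF \<tau>] zeta_lt_PInfty[OF \<tau>] xi_gt_MInfty[OF \<tau>]
      by eventually_elim (rule ereal_add_le_of_le_diff, auto)
  qed (use admissible_measurable_M[OF admissible_xi] J'n_measurable_M in simp)
  moreover have "AE \<omega> in M. J' (Suc n) \<theta> \<omega> \<le> H' \<theta> \<omega>"
    unfolding J'n_Suc
  proof (rule snell_family_le_supermart[OF sH(2) Suc.prems])
    fix \<tau> assume \<tau>: "\<tau> \<in> STs M F Tm"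
    show "AE \<omega> in M. J n \<tau> \<omega> - \<zeta> \<tau> \<omega> \<le> H' \<tau> \<omega>"
      using conjunct1[OF Suc.IH[OF \<tau>]] sandwich[OF \<tau>] nonneg[OF \<tau>] zeta_lt_PInfty[OF \<tau>] xi_gt_MInfty[OF \<tau>]
      by eventually_elim (rule ereal_diff_le_of_le_diff, auto)
  qed (use admissible_measurable_M[OF admissible_zeta] Jn_measurable_M in simp)
  ultimately show ?case by blast
qed

lemma Jlim_le_mokobodski_pair:
  assumes H: "mokobodski_pair M F Tm \<xi> \<zeta> H H'"
  shows "AE \<omega> in M. JL (\<lambda>_. 0) \<omega> \<le> H (\<lambda>_. 0) \<omega>"
proof -
  have "AE \<omega> in M. \<forall>n. J n (\<lambda>_. 0) \<omega> \<le> H (\<lambda>_. 0) \<omega>"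
    unfolding AE_all_countable using Jn_le_mokobodski_pair[OF H zero_in_STs] by blast
  with Jlim_eq_SUP[OF zero_in_STs] show ?thesis by eventually_elim (simp add: SUP_least)
qed

lemma mokobodski_pair_less_top:
  assumes H: "mokobodski_pair M F Tm \<xi> \<zeta> H H'" and fin: "AE \<omega> in M. H' (\<lambda>_. 0) \<omega> < \<infinity>"
  shows "AE \<omega> in M. H (\<lambda>_. 0) \<omega> < \<infinity>"
proof -
  have "AE \<omega> in M. 0 \<le> H' (\<lambda>_. 0) \<omega> \<and> H (\<lambda>_. 0) \<omega> - H' (\<lambda>_. 0) \<omega> \<le> \<zeta> (\<lambda>_. 0) \<omega>"
    using H zero_in_STs unfolding mokobodski_pair_def by (fastforce elim: eventually_elim2)
  with fin zeta_lt_PInfty[OF zero_in_STs] show ?thesis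
    by eventually_elim (auto intro: ereal_less_PInfty_of_diff_le)
qed

lemma dynkin_game_swap: "dynkin_game M F Tm (\<lambda>\<theta> \<omega>. - \<zeta> \<theta> \<omega>) (\<lambda>\<theta> \<omega>. - \<xi> \<theta> \<omega>)"
proof unfold_locales
  show "admissible M F Tm (\<lambda>\<theta> \<omega>. - \<zeta> \<theta> \<omega>)" by (rule admissible_uminus[OF admissible_zeta])
  show "admissible M F Tm (\<lambda>\<theta> \<omega>. - \<xi> \<theta> \<omega>)" by (rule admissible_uminus[OF admissible_xi])
  show "neg_part_integrable M F Tm (\<lambda>\<theta> \<omega>. - \<zeta> \<theta> \<omega>)"
    using zeta_pos unfolding neg_part_integrable_def pos_part_integrable_def by simp
  show "pos_part_integrable M F Tm (\<lambda>\<theta> \<omega>. - \<xi> \<theta> \<omega>)"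
    using xi_neg unfolding neg_part_integrable_def pos_part_integrable_def by simp
  show "AE \<omega> in M. - \<zeta> (\<lambda>_. Tm) \<omega> = 0" using zeta_Tm by eventually_elim simp
  show "AE \<omega> in M. - \<xi> (\<lambda>_. Tm) \<omega> = 0" using xi_Tm by eventually_elim simp
qed

lemma Jlim_less_top_iff_J'lim_less_top:
  "(AE \<omega> in M. JL (\<lambda>_. 0) \<omega> < \<infinity>) \<longleftrightarrow> (AE \<omega> in M. J'L (\<lambda>_. 0) \<omega> < \<infinity>)"
proof
  interpret swapped: dynkin_game M F Tm "\<lambda>\<theta> \<omega>. - \<zeta> \<theta> \<omega>" "\<lambda>\<theta> \<omega>. - \<xi> \<theta> \<omega>" by (rule dynkin_game_swap)
  show "AE \<omega> in M. JL (\<lambda>_. 0) \<omega> < \<infinity>" if "AE \<omega> in M. J'L (\<lambda>_. 0) \<omega> < \<infinity>"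
    using swapped.Jlim_less_top_imp_J'lim_less_top that by (simp add: Jlim_swap J'lim_swap)
qed (rule Jlim_less_top_imp_J'lim_less_top)

lemma Jlim_less_top_iff_mokobodski:
  "(AE \<omega> in M. JL (\<lambda>_. 0) \<omega> < \<infinity>) \<longleftrightarrow>
     (\<exists>H H'. mokobodski_pair M F Tm \<xi> \<zeta> H H' \<and> (AE \<omega> in M. H (\<lambda>_. 0) \<omega> < \<infinity>))"
proof
  assume "AE \<omega> in M. JL (\<lambda>_. 0) \<omega> < \<infinity>"
  with mokobodski_pair_Jlim show "\<exists>H H'. mokobodski_pair M F Tm \<xi> \<zeta> H H' \<and> (AE \<omega> in M. H (\<lambda>_. 0) \<omega> < \<infinity>)"
    by blast
next
  assume "\<exists>H H'. mokobodski_pair M F Tm \<xi> \<zeta> H H' \<and> (AE \<omega> in M. H (\<lambda>_. 0) \<omega> < \<infinity>)"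
  then obtain H H' where "mokobodski_pair M F Tm \<xi> \<zeta> H H'" "AE \<omega> in M. H (\<lambda>_. 0) \<omega> < \<infinity>" by blast
  with Jlim_le_mokobodski_pair show "AE \<omega> in M. JL (\<lambda>_. 0) \<omega> < \<infinity>"
    by (fastforce elim: eventually_elim2)
qed

lemma Jlim_less_top_iff_mokobodski':
  "(AE \<omega> in M. JL (\<lambda>_. 0) \<omega> < \<infinity>) \<longleftrightarrow>
     (\<exists>H H'. mokobodski_pair M F Tm \<xi> \<zeta> H H' \<and> (AE \<omega> in M. H' (\<lambda>_. 0) \<omega> < \<infinity>))"
  using Jlim_less_top_iff_mokobodski Jlim_less_top_iff_J'lim_less_top
    mokobodski_pair_Jlim mokobodski_pair_less_top by blast

end

theorem proposition2p7:
  fixes M :: "'a measure" and F :: "real \<Rightarrow> 'a measure" and Tm :: real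
    and \<xi> \<zeta> :: "'a family"
  assumes setting: "std_setting M F Tm"
    and adm_xi: "admissible M F Tm \<xi>" and adm_zeta: "admissible M F Tm \<zeta>"
    and xi_neg: "neg_part_integrable M F Tm \<xi>"
    and zeta_pos: "pos_part_integrable M F Tm \<zeta>"
    and xi_T: "AE \<omega> in M. \<xi> (\<lambda>_. Tm) \<omega> = 0"
    and zeta_T: "AE \<omega> in M. \<zeta> (\<lambda>_. Tm) \<omega> = 0"
  shows "((AE \<omega> in M. Jlim M F Tm \<xi> \<zeta> (\<lambda>_. 0) \<omega> < \<infinity>)
            \<longleftrightarrow> (AE \<omega> in M. J'lim M F Tm \<xi> \<zeta> (\<lambda>_. 0) \<omega> < \<infinity>))
       \<and> ((AE \<omega> in M. Jlim M F Tm \<xi> \<zeta> (\<lambda>_. 0) \<omega> < \<infinity>)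
            \<longleftrightarrow> (\<exists>H H'. supermart_family M F Tm H \<and> supermart_family M F Tm H'
                  \<and> (\<forall>\<theta>\<in>STs M F Tm. AE \<omega> in M. 0 \<le> H \<theta> \<omega> \<and> 0 \<le> H' \<theta> \<omega>)
                  \<and> (AE \<omega> in M. H (\<lambda>_. 0) \<omega> < \<infinity>)
                  \<and> (\<forall>\<theta>\<in>STs M F Tm. AE \<omega> in M.
                        \<xi> \<theta> \<omega> \<le> H \<theta> \<omega> - H' \<theta> \<omega> \<and> H \<theta> \<omega> - H' \<theta> \<omega> \<le> \<zeta> \<theta> \<omega>)))
       \<and> ((AE \<omega> in M. Jlim M F Tm \<xi> \<zeta> (\<lambda>_. 0) \<omega> < \<infinity>)
            \<longleftrightarrow> (\<exists>H H'. supermart_family M F Tm H \<and> supermart_family M F Tm H'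
                  \<and> (\<forall>\<theta>\<in>STs M F Tm. AE \<omega> in M. 0 \<le> H \<theta> \<omega> \<and> 0 \<le> H' \<theta> \<omega>)
                  \<and> (AE \<omega> in M. H' (\<lambda>_. 0) \<omega> < \<infinity>)
                  \<and> (\<forall>\<theta>\<in>STs M F Tm. AE \<omega> in M.
                        \<xi> \<theta> \<omega> \<le> H \<theta> \<omega> - H' \<theta> \<omega> \<and> H \<theta> \<omega> - H' \<theta> \<omega> \<le> \<zeta> \<theta> \<omega>)))"
proof -
  interpret dynkin_game M F Tm \<xi> \<zeta>
    by unfold_locales (fact setting adm_xi adm_zeta xi_neg zeta_pos xi_T zeta_T)+
  show ?thesis
    using Jlim_less_top_iff_J'lim_less_top Jlim_less_top_iff_mokobodski Jlim_less_top_iff_mokobodski'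
    unfolding mokobodski_pair_def by (simp only: conj_assoc conj_commute conj_left_commute)
qed

end
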